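(* Let $\Theta=\{1,2\}$, let $m\ge2$, let $P_1,\dots,P_m$ be experiments, and let $(A,u)$ be a decision problem with $A=\{a_1,\dots,a_n\}$ satisfying: $u(1,a_1)<\cdots<u(1,a_n)$; $u(2,a_1)>\cdots>u(2,a_n)$; $u(\cdot,a_1)=(0,0)$; and no $a_i$ is weakly*-dominated (there is no $\alpha\in\Delta(A\setminus\{a_i\})$ with $u(\cdot,a_i)\le u(\cdot,\alpha)$ componentwise). Let $(A_1^*,u_1^* ),\dots,(A_{n-1}^*,u_{n-1}^* )$ be its canonical decomposition. Then for every $j\in\{1,\dots,m\}$, $$V(P_1,\dots,P_m;(A,u))=V(P_{-j};(A,u))$$ if and only if $V(P_j;(A_\ell^*,u_\ell^* ))\le\max_{j'\ne j}V(P_{j'};(A_\ell^*,u_\ell^* ))$ for all $\ell=1,\dots,n-1$. Here $P_{-j}$ denotes the collection $(P_{j'})_{j'\ne j}$.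
   Context: $\Theta$ is a finite set of states. A decision problem is a pair $(A,u)$ with $A$ a finite nonempty action set and $u:\Theta\times A\to\mathbb{R}$; for $\alpha\in\Delta(A)$ write $u(\theta,\alpha)=\sum_a\alpha(a)u(\theta,a)$. An experiment is a map $P:\Theta\to\Delta(Y)$ with $Y$ a finite signal set. Given experiments $P_j:\Theta\to\Delta(Y_j)$, $j=1,\dots,m$, let $\mathbf Y=Y_1\times\cdots\times Y_m$ and let $\mathcal P(P_1,\dots,P_m)$ be the set of experiments $P:\Theta\to\Delta(\mathbf Y)$ whose $j$-th marginal is $P_j(\cdot|\theta)$ for every $\theta$ and $j$. A strategy is a map $\sigma:\mathbf Y\to\Delta(A)$. Define $V(P_1,\dots,P_m;(A,u))=\max_{\sigma}\min_{P\in\mathcal P(P_1,\dots,P_m)}\sum_{\theta}\sum_{\mathbf y}P(\mathbf y|\theta)u(\theta,\sigma(\mathbf y))$ (and analogously for any subcollection of the experiments); for a single experiment, $V(P;(A,u))=\max_{\sigma:Y\to\Delta(A)}\sum_\theta\sum_y P(y|\theta)u(\theta,\sigma(y))$. For $(A,u)$ with actions ordered $a_1,\dots,a_n$ as in the claim, its canonical decomposition is the collection of $n-1$ binary-action problems $(A_\ell^*,u_\ell^* )$ with $A_\ell^*=\{0,1\}$, $u_\ell^*(\cdot,0)=(0,0)$ and $u_\ell^*(\cdot,1)=u(\cdot,a_{\ell+1})-u(\cdot,a_\ell)$. *)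

theory Defs
  imports Complex_Main "HOL-Library.FuncSet"
begin

definition prob_on :: "'a set \<Rightarrow> ('a \<Rightarrow> real) \<Rightarrow> bool" where
  "prob_on S p \<longleftrightarrow> (\<forall>x. 0 \<le> p x) \<and> (\<forall>x. x \<notin> S \<longrightarrow> p x = 0) \<and> sum p S = 1"

definition mixed_util :: "nat set \<Rightarrow> (nat \<Rightarrow> nat \<Rightarrow> real) \<Rightarrow> nat \<Rightarrow> (nat \<Rightarrow> real) \<Rightarrow> real" where
  "mixed_util Ac u th alpha = (\<Sum>a\<in>Ac. alpha a * u th a)"

text \<open>Joint experiments over the product of the signal sets Y j (j in J) with the
  prescribed marginals P j (the set P(P_j, j in J)).  Signal profiles are elements of PiE J Y.\<close>
definition couplings ::
  "nat set \<Rightarrow> nat set \<Rightarrow> (nat \<Rightarrow> 'y set) \<Rightarrow> (nat \<Rightarrow> nat \<Rightarrow> 'y \<Rightarrow> real)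
    \<Rightarrow> (nat \<Rightarrow> (nat \<Rightarrow> 'y) \<Rightarrow> real) set" where
  "couplings Th J Y P = {Q. \<forall>th\<in>Th. prob_on (PiE J Y) (Q th) \<and>
      (\<forall>j\<in>J. \<forall>y\<in>Y j. (\<Sum>ys\<in>{ys \<in> PiE J Y. ys j = y}. Q th ys) = P j th y)}"

definition strategies :: "nat set \<Rightarrow> (nat \<Rightarrow> 'y set) \<Rightarrow> nat set \<Rightarrow> ((nat \<Rightarrow> 'y) \<Rightarrow> nat \<Rightarrow> real) set" where
  "strategies J Y Ac = {\<sigma>. \<forall>ys\<in>PiE J Y. prob_on Ac (\<sigma> ys)}"

definition payoff ::
  "nat set \<Rightarrow> nat set \<Rightarrow> (nat \<Rightarrow> 'y set) \<Rightarrow> nat set \<Rightarrow> (nat \<Rightarrow> nat \<Rightarrow> real)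
    \<Rightarrow> (nat \<Rightarrow> (nat \<Rightarrow> 'y) \<Rightarrow> real) \<Rightarrow> ((nat \<Rightarrow> 'y) \<Rightarrow> nat \<Rightarrow> real) \<Rightarrow> real" where
  "payoff Th J Y Ac u Q \<sigma> = (\<Sum>th\<in>Th. \<Sum>ys\<in>PiE J Y. Q th ys * mixed_util Ac u th (\<sigma> ys))"

definition Vmulti ::
  "nat set \<Rightarrow> nat set \<Rightarrow> (nat \<Rightarrow> 'y set) \<Rightarrow> (nat \<Rightarrow> nat \<Rightarrow> 'y \<Rightarrow> real)
    \<Rightarrow> nat set \<Rightarrow> (nat \<Rightarrow> nat \<Rightarrow> real) \<Rightarrow> real" where
  "Vmulti Th J Y P Ac u =
     (SUP \<sigma>\<in>strategies J Y Ac. INF Q\<in>couplings Th J Y P. payoff Th J Y Ac u Q \<sigma>)"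

definition Vsingle ::
  "nat set \<Rightarrow> 'y set \<Rightarrow> (nat \<Rightarrow> 'y \<Rightarrow> real) \<Rightarrow> nat set \<Rightarrow> (nat \<Rightarrow> nat \<Rightarrow> real) \<Rightarrow> real" where
  "Vsingle Th Yj Pj Ac u =
     (SUP \<sigma>\<in>{\<sigma>. \<forall>y\<in>Yj. prob_on Ac (\<sigma> y)}.
        \<Sum>th\<in>Th. \<Sum>y\<in>Yj. Pj th y * mixed_util Ac u th (\<sigma> y))"

text \<open>Canonical decomposition: l-th binary problem, actions {0,1},
  u*(.,0) = 0, u*(.,1) = u(., a_(l+1)) - u(., a_l).\<close>
definition canon_u :: "(nat \<Rightarrow> nat \<Rightarrow> real) \<Rightarrow> nat \<Rightarrow> nat \<Rightarrow> nat \<Rightarrow> real" where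
  "canon_u u l = (\<lambda>th a. if a = 1 then u th (Suc l) - u th l else 0)"

end

theory Submission
  imports Defs
begin

(* With two states, payoffs telescope into the increments of the canonical decomposition, and
  undominatedness makes the cutoff beliefs of the binary problems increase; hence any profile of
  decisions in the binary problems is weakly improved by a single mixed action. The value of the
  experiments is therefore the sum, over the binary problems, of the best single-experiment value.
  The decision maker secures it by following, in each binary problem, a best experiment.
  Conversely, nature can hold the value down to it: the upper envelope of the experiments' call
  functions at the cutoffs is the call function of a measure on the cutoff grid, every
  experiment's posterior distribution lies below it in the convex order, hence (Strassen) is a
  mean-preserving contraction of it, and drawing the experiments conditionally independently given
  a point of this measure gives a joint experiment worth no more than the best single experiment
  in every binary problem. The corollary follows because dropping experiment j changes the sum
  exactly when j is strictly best for some binary problem. *)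

section \<open>Hinge functions and call functions\<close>

lemma between_as_convex_combination:
  fixes a b x :: real
  assumes "a < b"
  defines "lam \<equiv> (b - x) / (b - a)"
  shows "x = lam * a + (1 - lam) * b"
    and "a \<le> x \<Longrightarrow> lam \<le> 1" and "x \<le> b \<Longrightarrow> 0 \<le> lam"
    and "a < x \<Longrightarrow> lam < 1" and "x < b \<Longrightarrow> 0 < lam"
proof -
  have ba: "0 < b - a" and ba': "b - a \<noteq> 0" using assms(1) by simp_all
  have l1: "1 - lam = (x - a) / (b - a)" using ba' unfolding lam_def by (simp add: field_simps)
  have "lam * a + (1 - lam) * b = ((b - x) * a + (x - a) * b) / (b - a)"
    unfolding l1 unfolding lam_def by (simp add: add_divide_distrib)
  also have "\<dots> = x * (b - a) / (b - a)" by (simp add: algebra_simps)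
  finally show "x = lam * a + (1 - lam) * b" using ba' by simp
  show "a \<le> x \<Longrightarrow> lam \<le> 1" "x \<le> b \<Longrightarrow> 0 \<le> lam" "a < x \<Longrightarrow> lam < 1" "x < b \<Longrightarrow> 0 < lam"
    using ba unfolding lam_def by (simp_all add: field_simps)
qed

lemma hinge_convex:
  fixes a b c z lam :: real
  assumes "0 \<le> lam" "lam \<le> 1" "c = lam * a + (1 - lam) * b"
  shows "max 0 (z - c) \<le> lam * max 0 (z - a) + (1 - lam) * max 0 (z - b)"
proof -
  have "z - c = lam * (z - a) + (1 - lam) * (z - b)" using assms(3) by (simp add: algebra_simps)
  moreover have "lam * (z - a) \<le> lam * max 0 (z - a)" "(1 - lam) * (z - b) \<le> (1 - lam) * max 0 (z - b)"
    using assms(1,2) by (simp_all add: mult_left_mono)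
  moreover have "0 \<le> lam * max 0 (z - a)" "0 \<le> (1 - lam) * max 0 (z - b)"
    using assms(1,2) by simp_all
  ultimately show ?thesis by linarith
qed

lemma hinge_affine_outside:
  fixes a b c z lam :: real
  assumes "0 \<le> lam" "lam \<le> 1" "c = lam * a + (1 - lam) * b" "a \<le> b" and z: "z \<le> a \<or> b \<le> z"
  shows "max 0 (z - c) = lam * max 0 (z - a) + (1 - lam) * max 0 (z - b)"
  using z
proof
  assume za: "z \<le> a"
  have "lam * (z - a) \<le> 0" "(1 - lam) * (z - b) \<le> 0"
    using assms(1,2,4) za by (simp_all add: mult_nonneg_nonpos)
  moreover have "z - c = lam * (z - a) + (1 - lam) * (z - b)" using assms(3) by (simp add: algebra_simps)
  ultimately show ?thesis using za assms(4) by simp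
next
  assume bz: "b \<le> z"
  have "0 \<le> lam * (z - a)" "0 \<le> (1 - lam) * (z - b)" using assms(1,2,4) bz by simp_all
  moreover have "z - c = lam * (z - a) + (1 - lam) * (z - b)" using assms(3) by (simp add: algebra_simps)
  ultimately show ?thesis using bz assms(4) by simp
qed

text \<open>A mean-preserving spread of mass \<open>\<epsilon>\<close> at \<open>pa\<close> onto \<open>pp \<le> pa \<le> pq\<close> raises the hinge
  \<open>t \<mapsto> max 0 (t - c)\<close> exactly for the strikes \<open>c\<close> strictly between \<open>pp\<close> and \<open>pq\<close>.\<close>

lemma hinge_spread:
  fixes pp pa pq \<alpha> \<beta> \<epsilon> c :: real
  assumes "pp \<le> pa" "pa \<le> pq" "0 \<le> \<alpha>" "0 \<le> \<beta>" "\<alpha> + \<beta> = \<epsilon>" "\<alpha> * pp + \<beta> * pq = \<epsilon> * pa"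
  shows "0 \<le> \<alpha> * max 0 (pp - c) + \<beta> * max 0 (pq - c) - \<epsilon> * max 0 (pa - c)"
    and "c \<le> pp \<Longrightarrow> \<alpha> * max 0 (pp - c) + \<beta> * max 0 (pq - c) - \<epsilon> * max 0 (pa - c) = 0"
    and "pq \<le> c \<Longrightarrow> \<alpha> * max 0 (pp - c) + \<beta> * max 0 (pq - c) - \<epsilon> * max 0 (pa - c) = 0"
    and "pp < c \<Longrightarrow> c < pq \<Longrightarrow> 0 < \<alpha> \<Longrightarrow> 0 < \<beta> \<Longrightarrow>
           0 < \<alpha> * max 0 (pp - c) + \<beta> * max 0 (pq - c) - \<epsilon> * max 0 (pa - c)"
proof -
  have "\<epsilon> = \<alpha> + \<beta>" using assms(5) by simp
  then have lin: "\<alpha> * (pp - c) + \<beta> * (pq - c) - \<epsilon> * (pa - c) = 0"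
    using assms(6) by (simp add: algebra_simps)
  show "0 \<le> \<alpha> * max 0 (pp - c) + \<beta> * max 0 (pq - c) - \<epsilon> * max 0 (pa - c)"
  proof (cases "c \<le> pa")
    case True
    have "\<alpha> * (pp - c) \<le> \<alpha> * max 0 (pp - c)" using assms(3) by (simp add: mult_left_mono)
    moreover have "max 0 (pq - c) = pq - c" "max 0 (pa - c) = pa - c" using True assms(2) by auto
    ultimately show ?thesis using lin by linarith
  qed (use assms(3,4) in simp)
  show "c \<le> pp \<Longrightarrow> \<alpha> * max 0 (pp - c) + \<beta> * max 0 (pq - c) - \<epsilon> * max 0 (pa - c) = 0"
    using lin assms(1,2) by (simp add: max_def)
  show "pq \<le> c \<Longrightarrow> \<alpha> * max 0 (pp - c) + \<beta> * max 0 (pq - c) - \<epsilon> * max 0 (pa - c) = 0"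
    using assms(1,2) by (simp add: max_def)
  assume h: "pp < c" "c < pq" "0 < \<alpha>" "0 < \<beta>"
  show "0 < \<alpha> * max 0 (pp - c) + \<beta> * max 0 (pq - c) - \<epsilon> * max 0 (pa - c)"
  proof (cases "c \<le> pa")
    case True
    then have "\<alpha> * max 0 (pp - c) + \<beta> * max 0 (pq - c) - \<epsilon> * max 0 (pa - c) = \<alpha> * (c - pp)"
      using lin h by (simp add: max_def algebra_simps)
    then show ?thesis using h by simp
  qed (use h in simp)
qed

text \<open>The change of the hinge at strike \<open>t\<close> when a unit atom at \<open>c\<close> is split between \<open>a < c\<close>
  and \<open>b > c\<close> without moving its mean.\<close>

definition tent :: "real \<Rightarrow> real \<Rightarrow> real \<Rightarrow> real \<Rightarrow> real" where
  "tent a c b t = (b - c) / (b - a) * max 0 (a - t) + (1 - (b - c) / (b - a)) * max 0 (b - t) - max 0 (c - t)"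

lemma tent:
  fixes a b c t :: real
  assumes "a < c" "c < b"
  shows tent_nonneg: "0 \<le> tent a c b t"
    and tent_eq_0: "t \<le> a \<or> b \<le> t \<Longrightarrow> tent a c b t = 0"
    and tent_pos: "a < t \<Longrightarrow> t < b \<Longrightarrow> 0 < tent a c b t"
proof -
  define lam where "lam = (b - c) / (b - a)"
  have lam: "lam * a + (1 - lam) * b = 1 * c" "0 < lam" "0 < 1 - lam"
    using between_as_convex_combination[of a b c] assms unfolding lam_def by auto
  have "tent a c b t = lam * max 0 (a - t) + (1 - lam) * max 0 (b - t) - 1 * max 0 (c - t)"
    unfolding tent_def lam_def by simp
  moreover note spread = hinge_spread[of a c b lam "1 - lam" 1 t]
  ultimately show "0 \<le> tent a c b t" "t \<le> a \<or> b \<le> t \<Longrightarrow> tent a c b t = 0"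
    "a < t \<Longrightarrow> t < b \<Longrightarrow> 0 < tent a c b t"
    using assms lam by (auto intro: spread)
qed

text \<open>The call function \<open>c \<mapsto> \<Sum>z. w z * max 0 (x z - c)\<close> of the weights \<open>w\<close> placed at the
  points \<open>x\<close>; measures with equal mass and mean are ordered in the convex order iff their call
  functions are.\<close>

definition call :: "'a set \<Rightarrow> ('a \<Rightarrow> real) \<Rightarrow> ('a \<Rightarrow> real) \<Rightarrow> real \<Rightarrow> real" where
  "call S w x c = (\<Sum>z\<in>S. w z * max 0 (x z - c))"

lemma call_nonneg: "(\<And>z. z \<in> S \<Longrightarrow> 0 \<le> w z) \<Longrightarrow> 0 \<le> call S w x c"
  unfolding call_def by (intro sum_nonneg) simp

lemma call_convex:
  assumes "\<And>z. z \<in> S \<Longrightarrow> 0 \<le> w z" "0 \<le> lam" "lam \<le> 1" "c = lam * a + (1 - lam) * b"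
  shows "call S w x c \<le> lam * call S w x a + (1 - lam) * call S w x b"
proof -
  have "call S w x c \<le> (\<Sum>z\<in>S. lam * (w z * max 0 (x z - a)) + (1 - lam) * (w z * max 0 (x z - b)))"
    unfolding call_def
  proof (rule sum_mono)
    fix z assume "z \<in> S"
    then have "w z * max 0 (x z - c) \<le> w z * (lam * max 0 (x z - a) + (1 - lam) * max 0 (x z - b))"
      using assms hinge_convex by (intro mult_left_mono) auto
    then show "w z * max 0 (x z - c) \<le> lam * (w z * max 0 (x z - a)) + (1 - lam) * (w z * max 0 (x z - b))"
      by (simp add: algebra_simps)
  qed
  then show ?thesis unfolding call_def by (simp add: sum.distrib sum_distrib_left)
qed

lemma call_affine_outside:
  assumes "0 \<le> lam" "lam \<le> 1" "c = lam * a + (1 - lam) * b" "a \<le> b"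
    and outside: "\<And>z. z \<in> S \<Longrightarrow> w z \<noteq> 0 \<Longrightarrow> x z \<le> a \<or> b \<le> x z"
  shows "call S w x c = lam * call S w x a + (1 - lam) * call S w x b"
proof -
  have "call S w x c = (\<Sum>z\<in>S. lam * (w z * max 0 (x z - a)) + (1 - lam) * (w z * max 0 (x z - b)))"
    unfolding call_def
  proof (rule sum.cong[OF refl])
    fix z assume z: "z \<in> S"
    show "w z * max 0 (x z - c) = lam * (w z * max 0 (x z - a)) + (1 - lam) * (w z * max 0 (x z - b))"
    proof (cases "w z = 0")
      case False
      then have "max 0 (x z - c) = lam * max 0 (x z - a) + (1 - lam) * max 0 (x z - b)"
        using hinge_affine_outside[OF assms(1-4)] outside[OF z] by blast
      then show ?thesis by (metis distrib_left mult.left_commute)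
    qed simp
  qed
  then show ?thesis unfolding call_def by (simp add: sum.distrib sum_distrib_left)
qed

lemma call_three_point:
  assumes "\<And>z. z \<in> S \<Longrightarrow> 0 \<le> w z" "a < b" "b < c"
  shows "call S w x b * (c - a) \<le> call S w x a * (c - b) + call S w x c * (b - a)"
proof -
  define lam where "lam = (c - b) / (c - a)"
  have ca: "0 < c - a" using assms by simp
  have lam: "b = lam * a + (1 - lam) * c" "0 \<le> lam" "lam \<le> 1"
    using between_as_convex_combination[of a c b] assms unfolding lam_def by auto
  have "call S w x b * (c - a) \<le> (lam * call S w x a + (1 - lam) * call S w x c) * (c - a)"
    using call_convex[OF assms(1) lam(2,3,1)] ca by (simp add: mult_right_mono)
  also have "\<dots> = call S w x a * (lam * (c - a)) + call S w x c * ((1 - lam) * (c - a))"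
    by (simp add: algebra_simps)
  also have "\<dots> = call S w x a * (c - b) + call S w x c * (b - a)"
  proof -
    have "1 - lam = (b - a) / (c - a)" using ca unfolding lam_def by (simp add: field_simps)
    then have "lam * (c - a) = c - b" "(1 - lam) * (c - a) = b - a" using ca unfolding lam_def by simp_all
    then show ?thesis by simp
  qed
  finally show ?thesis .
qed

section \<open>Martingale kernels onto a finite grid\<close>

lemma sum_delta_mult:
  fixes c :: real
  assumes "finite A" "a \<in> A"
  shows "(\<Sum>x\<in>A. (if x = a then c else 0) * f x) = c * f a"
  using assms by (simp add: if_distrib[where f = "\<lambda>t. t * _"] cong: if_cong)

definition move_mass :: "('x \<Rightarrow> real) \<Rightarrow> 'x \<Rightarrow> 'x \<Rightarrow> 'x \<Rightarrow> real \<Rightarrow> real \<Rightarrow> real \<Rightarrow> 'x \<Rightarrow> real" where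
  "move_mass \<mu> a p q \<epsilon> \<alpha> \<beta> = (\<lambda>x. \<mu> x - (if x = a then \<epsilon> else 0)
      + (if x = p then \<alpha> else 0) + (if x = q then \<beta> else 0))"

lemma sum_move_mass_mult:
  assumes "finite A" "a \<in> A" "p \<in> A" "q \<in> A"
  shows "(\<Sum>x\<in>A. move_mass \<mu> a p q \<epsilon> \<alpha> \<beta> x * f x)
           = (\<Sum>x\<in>A. \<mu> x * f x) - \<epsilon> * f a + \<alpha> * f p + \<beta> * f q"
proof -
  have "(\<Sum>x\<in>A. move_mass \<mu> a p q \<epsilon> \<alpha> \<beta> x * f x) =
     (\<Sum>x\<in>A. \<mu> x * f x) - (\<Sum>x\<in>A. (if x = a then \<epsilon> else 0) * f x)
      + (\<Sum>x\<in>A. (if x = p then \<alpha> else 0) * f x) + (\<Sum>x\<in>A. (if x = q then \<beta> else 0) * f x)"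
    unfolding move_mass_def by (simp add: ring_distribs sum.distrib sum_subtractf)
  then show ?thesis using assms by (simp add: sum_delta_mult)
qed

lemma sum_move_mass:
  assumes "finite A" "a \<in> A" "p \<in> A" "q \<in> A"
  shows "(\<Sum>x\<in>A. move_mass \<mu> a p q \<epsilon> \<alpha> \<beta> x) = (\<Sum>x\<in>A. \<mu> x) - \<epsilon> + \<alpha> + \<beta>"
  using sum_move_mass_mult[OF assms, of \<mu> \<epsilon> \<alpha> \<beta> "\<lambda>_. 1"] by simp

lemma call_move_mass:
  assumes "finite A" "a \<in> A" "p \<in> A" "q \<in> A"
  shows "call A (move_mass \<mu> a p q \<epsilon> \<alpha> \<beta>) x c
           = call A \<mu> x c - \<epsilon> * max 0 (x a - c) + \<alpha> * max 0 (x p - c) + \<beta> * max 0 (x q - c)"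
  unfolding call_def by (rule sum_move_mass_mult[OF assms])

text \<open>A transport plan from \<open>\<mu>\<close> to \<open>\<nu>\<close> each of whose rows keeps the barycentre of its source
  point, i.e.\ a martingale coupling of \<open>\<mu>\<close> and \<open>\<nu>\<close>.\<close>

definition martingale_kernel ::
  "'x set \<Rightarrow> ('x \<Rightarrow> real) \<Rightarrow> ('x \<Rightarrow> real) \<Rightarrow> ('x \<Rightarrow> real) \<Rightarrow> ('x \<Rightarrow> 'x \<Rightarrow> real) \<Rightarrow> bool" where
  "martingale_kernel A pos \<mu> \<nu> \<pi> \<longleftrightarrow> (\<forall>x y. 0 \<le> \<pi> x y)
     \<and> (\<forall>x\<in>A. sum (\<pi> x) A = \<mu> x \<and> (\<Sum>y\<in>A. \<pi> x y * pos y) = \<mu> x * pos x)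
     \<and> (\<forall>y\<in>A. (\<Sum>x\<in>A. \<pi> x y) = \<nu> y)"

text \<open>Undoing a mean-preserving move of mass from \<open>a\<close> to \<open>p\<close> and \<open>q\<close>: row \<open>a\<close> takes over the
  shares \<open>\<alpha>/\<mu>' p\<close> and \<open>\<beta>/\<mu>' q\<close> of the rows of \<open>p\<close> and \<open>q\<close>, which keeps all columns.\<close>

lemma martingale_kernel_move_mass:
  assumes fin: "finite A" and inA: "a \<in> A" "p \<in> A" "q \<in> A"
    and dist: "a \<noteq> p" "a \<noteq> q" "p \<noteq> q"
    and nonneg: "0 \<le> \<mu> p" "0 \<le> \<mu> q" "0 \<le> \<alpha>" "0 \<le> \<beta>" and sum_ab: "\<alpha> + \<beta> = \<epsilon>"
    and mean: "\<alpha> * pos p + \<beta> * pos q = \<epsilon> * pos a"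
    and kernel: "martingale_kernel A pos (move_mass \<mu> a p q \<epsilon> \<alpha> \<beta>) \<nu> \<pi>'"
  shows "\<exists>\<pi>. martingale_kernel A pos \<mu> \<nu> \<pi>"
proof -
  define \<mu>' where "\<mu>' = move_mass \<mu> a p q \<epsilon> \<alpha> \<beta>"
  have \<mu>'_pq: "\<mu>' p = \<mu> p + \<alpha>" "\<mu>' q = \<mu> q + \<beta>" using dist unfolding \<mu>'_def move_mass_def by auto
  have \<mu>'_eq: "\<mu>' x = \<mu> x - (if x = a then \<epsilon> else 0) + (if x = p then \<alpha> else 0) + (if x = q then \<beta> else 0)" for x
    unfolding \<mu>'_def move_mass_def by simp
  define cp where "cp = \<alpha> / \<mu>' p"
  define cq where "cq = \<beta> / \<mu>' q"
  have cp: "cp * \<mu>' p = \<alpha>" "0 \<le> cp" "cp \<le> 1" and cq: "cq * \<mu>' q = \<beta>" "0 \<le> cq" "cq \<le> 1"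
    using \<mu>'_pq nonneg unfolding cp_def cq_def by (auto simp: divide_le_eq)
  define \<pi> where "\<pi> x y = \<pi>' x y + (if x = a then cp * \<pi>' p y + cq * \<pi>' q y else 0)
      - (if x = p then cp * \<pi>' p y else 0) - (if x = q then cq * \<pi>' q y else 0)" for x y
  have \<pi>'_nonneg: "0 \<le> \<pi>' x y" for x y using kernel unfolding martingale_kernel_def by blast
  have row: "(\<Sum>y\<in>A. \<pi> x y * f y) = \<mu> x * f x + (if x = a then \<alpha> * f p + \<beta> * f q - \<epsilon> * f a else 0)"
    if x: "x \<in> A" and rows': "\<And>z. z \<in> A \<Longrightarrow> (\<Sum>y\<in>A. \<pi>' z y * f y) = \<mu>' z * f z" for x f
  proof -
    have "(\<Sum>y\<in>A. \<pi> x y * f y) = (\<Sum>y\<in>A. \<pi>' x y * f y)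
        + (if x = a then cp * (\<Sum>y\<in>A. \<pi>' p y * f y) + cq * (\<Sum>y\<in>A. \<pi>' q y * f y) else 0)
        - (if x = p then cp * (\<Sum>y\<in>A. \<pi>' p y * f y) else 0)
        - (if x = q then cq * (\<Sum>y\<in>A. \<pi>' q y * f y) else 0)"
      unfolding \<pi>_def by (simp add: algebra_simps sum.distrib sum_subtractf sum_distrib_left)
    also have "\<dots> = \<mu>' x * f x + (if x = a then \<alpha> * f p + \<beta> * f q else 0)
        - (if x = p then \<alpha> * f p else 0) - (if x = q then \<beta> * f q else 0)"
      using rows' x inA cp(1) cq(1) by (simp add: mult.assoc[symmetric])
    also have "\<dots> = \<mu> x * f x + (if x = a then \<alpha> * f p + \<beta> * f q - \<epsilon> * f a else 0)"
      unfolding \<mu>'_eq using dist by (auto simp: algebra_simps)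
    finally show ?thesis .
  qed
  have "martingale_kernel A pos \<mu> \<nu> \<pi>"
    unfolding martingale_kernel_def
  proof (intro conjI allI ballI)
    fix x y
    show "0 \<le> \<pi> x y"
      using \<pi>'_nonneg[of x y] \<pi>'_nonneg[of p y] \<pi>'_nonneg[of q y] cp cq dist
      unfolding \<pi>_def by (auto simp: algebra_simps mult_left_le_one_le)
  next
    fix x assume x: "x \<in> A"
    have "(\<Sum>y\<in>A. \<pi> x y * 1) = \<mu> x * 1"
      using row[OF x, of "\<lambda>_. 1"] kernel sum_ab unfolding martingale_kernel_def \<mu>'_def by simp
    then show "sum (\<pi> x) A = \<mu> x" by simp
    show "(\<Sum>y\<in>A. \<pi> x y * pos y) = \<mu> x * pos x"
      using row[OF x, of pos] kernel mean unfolding martingale_kernel_def \<mu>'_def by simp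
  next
    fix y assume y: "y \<in> A"
    have "(\<Sum>x\<in>A. \<pi> x y) = (\<Sum>x\<in>A. \<pi>' x y) + (cp * \<pi>' p y + cq * \<pi>' q y) - cp * \<pi>' p y - cq * \<pi>' q y"
      unfolding \<pi>_def using fin inA by (simp add: sum.distrib sum_subtractf)
    then show "(\<Sum>x\<in>A. \<pi> x y) = \<nu> y" using kernel y unfolding martingale_kernel_def by simp
  qed
  then show ?thesis by blast
qed

lemma weighted_lex_less:
  fixes b c1 c2 c3 d1 d2 d3 :: nat
  assumes "c2 < b" "c3 < b"
    and "c1 < d1 \<or> (c1 = d1 \<and> c2 < d2) \<or> (c1 = d1 \<and> c2 \<le> d2 \<and> c3 < d3)"
  shows "c1 * b^2 + c2 * b + c3 < d1 * b^2 + d2 * b + d3"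
proof -
  have low: "c2 * b + c3 < b^2"
  proof -
    have "c2 * b + c3 < c2 * b + b" using assms(2) by simp
    also have "\<dots> = Suc c2 * b" by simp
    also have "\<dots> \<le> b * b" using assms(1) by (intro mult_right_mono) auto
    finally show ?thesis by (simp add: power2_eq_square)
  qed
  consider "c1 < d1" | "c1 = d1 \<and> c2 < d2" | "c1 = d1 \<and> c2 \<le> d2 \<and> c3 < d3" using assms(3) by blast
  then show ?thesis
  proof cases
    case 1
    then have "Suc c1 * b^2 \<le> d1 * b^2" by (intro mult_right_mono) auto
    then show ?thesis using low by simp
  next
    case 2
    then have "Suc c2 * b \<le> d2 * b" by (intro mult_right_mono) auto
    then show ?thesis using 2 assms(2) by simp
  next
    case 3
    then have "c2 * b \<le> d2 * b" by (intro mult_right_mono) auto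
    then show ?thesis using 3 by (auto intro: add_le_less_mono)
  qed
qed

lemma grid_bracket:
  fixes s :: "nat \<Rightarrow> real"
  assumes "1 \<le> K" "s 0 \<le> t" "t \<le> s K"
  obtains k where "k < K" "s k \<le> t" "t \<le> s (Suc k)"
proof -
  define k where "k = Max {i. i < K \<and> s i \<le> t}"
  have fin: "finite {i. i < K \<and> s i \<le> t}" by simp
  have "0 \<in> {i. i < K \<and> s i \<le> t}" using assms by simp
  then have k: "k < K" "s k \<le> t" using Max_in[OF fin] unfolding k_def by blast+
  have "t \<le> s (Suc k)"
  proof (cases "Suc k < K")
    case True
    show ?thesis
    proof (rule ccontr)
      assume "\<not> t \<le> s (Suc k)"
      then have "Suc k \<in> {i. i < K \<and> s i \<le> t}" using True by simp
      then have "Suc k \<le> k" unfolding k_def by (rule Max_ge[OF fin])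
      then show False by simp
    qed
  next
    case False
    then have "Suc k = K" using k by simp
    then show ?thesis using assms(3) by simp
  qed
  then show ?thesis using k that by blast
qed

lemma positive_run:
  fixes f :: "nat \<Rightarrow> real"
  assumes "f 0 = 0" "f K = 0" "l0 \<le> K" "0 < f l0"
  obtains p q where "p < l0" "l0 < q" "q \<le> K" "f p = 0" "f q = 0" "\<And>i. p < i \<Longrightarrow> i < q \<Longrightarrow> f i \<noteq> 0"
proof -
  have l0: "0 < l0" "l0 < K" using assms by (auto intro!: Nat.gr0I simp: order.order_iff_strict)
  define p where "p = Max {i. i < l0 \<and> f i = 0}"
  define q where "q = Min {i. l0 < i \<and> i \<le> K \<and> f i = 0}"
  have finP: "finite {i. i < l0 \<and> f i = 0}" and finQ: "finite {i. l0 < i \<and> i \<le> K \<and> f i = 0}" by simp_all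
  have "0 \<in> {i. i < l0 \<and> f i = 0}" "K \<in> {i. l0 < i \<and> i \<le> K \<and> f i = 0}" using assms l0 by auto
  then have p: "p < l0" "f p = 0" and q: "l0 < q" "q \<le> K" "f q = 0"
    using Max_in[OF finP] Min_in[OF finQ] unfolding p_def q_def by blast+
  have "f i \<noteq> 0" if "p < i" "i < q" for i
  proof
    assume fi: "f i = 0"
    consider "i < l0" | "i = l0" | "l0 < i" by linarith
    then show False
    proof cases
      case 1
      then have "i \<le> p" unfolding p_def using fi by (intro Max_ge[OF finP]) simp
      then show False using that by simp
    next
      case 2 then show False using fi assms(4) by simp
    next
      case 3
      then have "q \<le> i" unfolding q_def using fi that q by (intro Min_le[OF finQ]) simp
      then show False using that by simp
    qed
  qed
  then show ?thesis using p q that by blast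
qed

text \<open>A signed measure on a strictly increasing grid is determined by its mass and its call
  function at the grid points: the top atom is detected at the grid point just below it.\<close>

lemma grid_measure_eq_0:
  fixes s D :: "nat \<Rightarrow> real"
  assumes s_mono: "\<And>i j. i < j \<Longrightarrow> j \<le> K \<Longrightarrow> s i < s j"
    and mass: "(\<Sum>i\<le>K. D i) = 0" and calls: "\<And>l. l \<le> K \<Longrightarrow> (\<Sum>i\<le>K. D i * max 0 (s i - s l)) = 0"
  shows "i \<le> K \<Longrightarrow> D i = 0"
proof (rule ccontr)
  assume "i \<le> K" "D i \<noteq> 0"
  then have ne: "{i\<in>{..K}. D i \<noteq> 0} \<noteq> {}" by auto
  define i0 where "i0 = Max {i\<in>{..K}. D i \<noteq> 0}"
  have i0: "i0 \<le> K" "D i0 \<noteq> 0" using Max_in[OF _ ne] unfolding i0_def by auto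
  have bound: "i \<le> i0" if "i \<le> K" "D i \<noteq> 0" for i
    unfolding i0_def by (rule Max_ge) (use that in auto)
  have above: "D i = 0" if "i \<le> K" "i0 < i" for i
    using bound[of i] that by auto
  have split: "(\<Sum>i\<le>K. f i) = f i0 + (\<Sum>i\<in>{..K} - {i0}. f i)" for f :: "nat \<Rightarrow> real"
    using i0 by (intro sum.remove) auto
  show False
  proof (cases "i0 = 0")
    case True
    have "(\<Sum>i\<in>{..K} - {i0}. D i) = 0" by (rule sum.neutral) (use above True in auto)
    then show False using mass split[of D] i0(2) by linarith
  next
    case False
    define l where "l = i0 - 1"
    have l: "l \<le> K" "l < i0" using i0 False unfolding l_def by auto
    have "(\<Sum>i\<in>{..K} - {i0}. D i * max 0 (s i - s l)) = 0"
    proof (rule sum.neutral, intro ballI)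
      fix i assume i: "i \<in> {..K} - {i0}"
      show "D i * max 0 (s i - s l) = 0"
      proof (cases "i < i0")
        case True
        then have "i \<le> l" unfolding l_def by linarith
        then have "s i \<le> s l" using s_mono[of i l] l(1) by (cases "i = l") simp_all
        then show ?thesis by simp
      next
        case False
        then have "i0 < i" using i by auto
        then show ?thesis using above i by simp
      qed
    qed
    then have "D i0 * max 0 (s i0 - s l) = 0"
      using calls[OF l(1)] split[of "\<lambda>i. D i * max 0 (s i - s l)"] by linarith
    moreover have "s l < s i0" using s_mono[OF l(2) i0(1)] .
    ultimately show False using i0 by simp
  qed
qed

lemma martingale_kernel_diagonal:
  assumes "finite A" "\<And>x. x \<in> A \<Longrightarrow> 0 \<le> \<mu> x" "\<And>x. x \<in> A \<Longrightarrow> \<mu> x = \<nu> x"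
  shows "martingale_kernel A pos \<mu> \<nu> (\<lambda>x y. if x = y \<and> x \<in> A then \<mu> x else 0)"
  unfolding martingale_kernel_def
proof (intro conjI allI ballI)
  fix x y show "0 \<le> (if x = y \<and> x \<in> A then \<mu> x else 0)" using assms(2) by auto
next
  fix x assume "x \<in> A"
  then show "(\<Sum>y\<in>A. if x = y \<and> x \<in> A then \<mu> x else 0) = \<mu> x"
    and "(\<Sum>y\<in>A. (if x = y \<and> x \<in> A then \<mu> x else 0) * pos y) = \<mu> x * pos x"
    using assms(1) by (simp_all add: if_distrib[where f = "\<lambda>t. t * _"] cong: if_cong)
next
  fix y assume "y \<in> A"
  then show "(\<Sum>x\<in>A. if x = y \<and> x \<in> A then \<mu> x else 0) = \<nu> y"
    using assms(1,3) by (simp add: sum.delta')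
qed

lemma martingale_kernel_Plus:
  assumes fin: "finite S" "finite T" and kernel: "martingale_kernel (S <+> T) pos \<mu> \<nu> \<pi>"
    and \<nu>_left: "\<And>x. x \<in> S \<Longrightarrow> \<nu> (Inl x) = 0" and \<mu>_right: "\<And>t. t \<in> T \<Longrightarrow> \<mu> (Inr t) = 0"
  shows "x \<in> S \<Longrightarrow> (\<Sum>t\<in>T. \<pi> (Inl x) (Inr t)) = \<mu> (Inl x)"
    and "x \<in> S \<Longrightarrow> (\<Sum>t\<in>T. \<pi> (Inl x) (Inr t) * pos (Inr t)) = \<mu> (Inl x) * pos (Inl x)"
    and "t \<in> T \<Longrightarrow> (\<Sum>x\<in>S. \<pi> (Inl x) (Inr t)) = \<nu> (Inr t)"
proof -
  have \<pi>_nonneg: "0 \<le> \<pi> a b" for a b using kernel unfolding martingale_kernel_def by blast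
  have sum_Plus: "sum f (S <+> T) = (\<Sum>x\<in>S. f (Inl x)) + (\<Sum>t\<in>T. f (Inr t))" for f :: "_ \<Rightarrow> real"
    using fin by (simp add: sum.Plus)
  have fin_ST: "finite (S <+> T)" using fin by simp
  have left_col: "\<pi> a (Inl x') = 0" if "a \<in> S <+> T" "x' \<in> S" for a x'
  proof -
    have "Inl x' \<in> S <+> T" using that(2) by (rule InlI)
    then have "(\<Sum>a\<in>S <+> T. \<pi> a (Inl x')) = 0" using kernel \<nu>_left[OF that(2)] unfolding martingale_kernel_def by auto
    then show ?thesis using sum_nonneg_0[OF fin_ST, of "\<lambda>a. \<pi> a (Inl x')"] \<pi>_nonneg that(1) by blast
  qed
  have right_row: "\<pi> (Inr t) b = 0" if "t \<in> T" "b \<in> S <+> T" for t b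
  proof -
    have "Inr t \<in> S <+> T" using that(1) by (rule InrI)
    then have "sum (\<pi> (Inr t)) (S <+> T) = 0" using kernel \<mu>_right[OF that(1)] unfolding martingale_kernel_def by auto
    then show ?thesis using sum_nonneg_0[OF fin_ST, of "\<pi> (Inr t)"] \<pi>_nonneg that(2) by blast
  qed
  show "x \<in> S \<Longrightarrow> (\<Sum>t\<in>T. \<pi> (Inl x) (Inr t)) = \<mu> (Inl x)"
    using kernel left_col unfolding martingale_kernel_def sum_Plus by auto
  show "x \<in> S \<Longrightarrow> (\<Sum>t\<in>T. \<pi> (Inl x) (Inr t) * pos (Inr t)) = \<mu> (Inl x) * pos (Inl x)"
    using kernel left_col unfolding martingale_kernel_def sum_Plus by auto
  show "t \<in> T \<Longrightarrow> (\<Sum>x\<in>S. \<pi> (Inl x) (Inr t)) = \<nu> (Inr t)"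
    using kernel right_row unfolding martingale_kernel_def sum_Plus by auto
qed

text \<open>Strassen's theorem for a target \<open>\<nu>\<close> carried by a finite grid: a measure \<open>\<mu>\<close> with the mass
  and mean of \<open>\<nu>\<close> whose call function lies below that of \<open>\<nu>\<close> at the grid points admits a
  martingale kernel to \<open>\<nu>\<close>.  The proof descends on \<open>defect\<close>: off-grid atoms are split between the
  two neighbouring grid points, and inside a maximal run of positive call gap a grid atom is spread
  to the ends of the run until the atom is used up or a gap closes.\<close>

locale grid_target =
  fixes A :: "'x set" and gp :: "nat \<Rightarrow> 'x" and K :: nat and s :: "nat \<Rightarrow> real"
    and pos :: "'x \<Rightarrow> real" and \<nu> :: "'x \<Rightarrow> real"
  assumes finite_A: "finite A" and K_pos: "1 \<le> K"
    and gp_in: "\<And>i. i \<le> K \<Longrightarrow> gp i \<in> A"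
    and inj_gp: "inj_on gp {..K}"
    and pos_gp: "\<And>i. i \<le> K \<Longrightarrow> pos (gp i) = s i"
    and s_strict_mono: "\<And>i j. i < j \<Longrightarrow> j \<le> K \<Longrightarrow> s i < s j"
    and pos_ge: "\<And>x. x \<in> A \<Longrightarrow> s 0 \<le> pos x"
    and pos_le: "\<And>x. x \<in> A \<Longrightarrow> pos x \<le> s K"
    and \<nu>_nonneg: "\<And>x. x \<in> A \<Longrightarrow> 0 \<le> \<nu> x"
    and \<nu>_on_grid: "\<And>x. x \<in> A \<Longrightarrow> x \<notin> gp ` {..K} \<Longrightarrow> \<nu> x = 0"
begin

abbreviation has_martingale_kernel :: "('x \<Rightarrow> real) \<Rightarrow> bool" where
  "has_martingale_kernel \<mu> \<equiv> \<exists>\<pi>. martingale_kernel A pos \<mu> \<nu> \<pi>"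

definition call_gap :: "('x \<Rightarrow> real) \<Rightarrow> nat \<Rightarrow> real" where
  "call_gap \<mu> l = call A \<nu> pos (s l) - call A \<mu> pos (s l)"

definition below_target :: "('x \<Rightarrow> real) \<Rightarrow> bool" where
  "below_target \<mu> \<longleftrightarrow> (\<forall>x\<in>A. 0 \<le> \<mu> x) \<and> sum \<mu> A = sum \<nu> A
     \<and> (\<Sum>x\<in>A. \<mu> x * pos x) = (\<Sum>x\<in>A. \<nu> x * pos x) \<and> (\<forall>l\<le>K. 0 \<le> call_gap \<mu> l)"

definition off_grid :: "'x set" where
  "off_grid = A - gp ` {..K}"

definition off_grid_atoms :: "('x \<Rightarrow> real) \<Rightarrow> 'x set" where
  "off_grid_atoms \<mu> = {x\<in>off_grid. 0 < \<mu> x}"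

definition positive_gaps :: "('x \<Rightarrow> real) \<Rightarrow> nat set" where
  "positive_gaps \<mu> = {l\<in>{..K}. 0 < call_gap \<mu> l}"

definition gap_atoms :: "('x \<Rightarrow> real) \<Rightarrow> nat set" where
  "gap_atoms \<mu> = {l\<in>positive_gaps \<mu>. 0 < \<mu> (gp l)}"

definition defect :: "('x \<Rightarrow> real) \<Rightarrow> nat" where
  "defect \<mu> = card (off_grid_atoms \<mu>) * (K + 2)^2 + card (positive_gaps \<mu>) * (K + 2) + card (gap_atoms \<mu>)"

lemma s_mono: "i \<le> j \<Longrightarrow> j \<le> K \<Longrightarrow> s i \<le> s j"
  using s_strict_mono[of i j] by (cases "i = j") auto

lemma gp_eq_iff: "i \<le> K \<Longrightarrow> j \<le> K \<Longrightarrow> gp i = gp j \<longleftrightarrow> i = j"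
  using inj_gp by (auto dest: inj_onD)

lemma finite_off_grid_atoms: "finite (off_grid_atoms \<mu>)"
  unfolding off_grid_atoms_def off_grid_def using finite_A by simp

lemma card_grid_subset_less: "S \<subseteq> {..K} \<Longrightarrow> card S < K + 2"
  using card_mono[of "{..K}" S] by simp

lemma defect_less:
  assumes "off_grid_atoms \<mu>' \<subset> off_grid_atoms \<mu> \<or> off_grid_atoms \<mu>' = off_grid_atoms \<mu> \<and>
    (positive_gaps \<mu>' \<subset> positive_gaps \<mu> \<or> positive_gaps \<mu>' \<subseteq> positive_gaps \<mu> \<and> gap_atoms \<mu>' \<subset> gap_atoms \<mu>)"
  shows "defect \<mu>' < defect \<mu>"
proof -
  have fin: "finite (positive_gaps \<mu>)" "finite (gap_atoms \<mu>)"
    unfolding gap_atoms_def positive_gaps_def by simp_all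
  have sub: "positive_gaps \<mu>' \<subseteq> {..K}" "gap_atoms \<mu>' \<subseteq> {..K}"
    unfolding gap_atoms_def positive_gaps_def by auto
  show ?thesis
    unfolding defect_def
  proof (rule weighted_lex_less)
    show "card (positive_gaps \<mu>') < K + 2" by (rule card_grid_subset_less[OF sub(1)])
    show "card (gap_atoms \<mu>') < K + 2" by (rule card_grid_subset_less[OF sub(2)])
    show "card (off_grid_atoms \<mu>') < card (off_grid_atoms \<mu>) \<or>
      card (off_grid_atoms \<mu>') = card (off_grid_atoms \<mu>) \<and> card (positive_gaps \<mu>') < card (positive_gaps \<mu>) \<or>
      card (off_grid_atoms \<mu>') = card (off_grid_atoms \<mu>) \<and> card (positive_gaps \<mu>') \<le> card (positive_gaps \<mu>)
        \<and> card (gap_atoms \<mu>') < card (gap_atoms \<mu>)"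
      using assms fin finite_off_grid_atoms by (auto intro: psubset_card_mono card_mono)
  qed
qed

lemma call_gap_move_mass:
  assumes "a \<in> A" "p \<in> A" "q \<in> A"
  shows "call_gap (move_mass \<mu> a p q \<epsilon> \<alpha> \<beta>) l = call_gap \<mu> l
     - (\<alpha> * max 0 (pos p - s l) + \<beta> * max 0 (pos q - s l) - \<epsilon> * max 0 (pos a - s l))"
  unfolding call_gap_def using call_move_mass[OF finite_A assms] by simp

lemma below_target_move_mass:
  assumes below: "below_target \<mu>" and inA: "a \<in> A" "p \<in> A" "q \<in> A" and dist: "a \<noteq> p" "a \<noteq> q"
    and "\<epsilon> \<le> \<mu> a" "0 \<le> \<alpha>" "0 \<le> \<beta>" "\<alpha> + \<beta> = \<epsilon>" and mean: "\<alpha> * pos p + \<beta> * pos q = \<epsilon> * pos a"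
    and gaps: "\<forall>l\<le>K. 0 \<le> call_gap (move_mass \<mu> a p q \<epsilon> \<alpha> \<beta>) l"
  shows "below_target (move_mass \<mu> a p q \<epsilon> \<alpha> \<beta>)"
proof -
  have "\<forall>x\<in>A. 0 \<le> move_mass \<mu> a p q \<epsilon> \<alpha> \<beta> x"
    using below assms(7-9) dist unfolding below_target_def move_mass_def by auto
  moreover have "sum (move_mass \<mu> a p q \<epsilon> \<alpha> \<beta>) A = sum \<mu> A"
    using sum_move_mass[OF finite_A inA] assms(10) by simp
  moreover have "(\<Sum>x\<in>A. move_mass \<mu> a p q \<epsilon> \<alpha> \<beta> x * pos x) = (\<Sum>x\<in>A. \<mu> x * pos x)"
    using sum_move_mass_mult[OF finite_A inA, of \<mu> \<epsilon> \<alpha> \<beta> pos] mean by simp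
  ultimately show ?thesis using below gaps unfolding below_target_def by simp
qed

lemma call_gap_ends:
  assumes "below_target \<mu>"
  shows "call_gap \<mu> 0 = 0" "call_gap \<mu> K = 0"
proof -
  have "call A f pos (s 0) = (\<Sum>x\<in>A. f x * pos x) - s 0 * sum f A" for f
  proof -
    have "call A f pos (s 0) = (\<Sum>x\<in>A. f x * pos x - s 0 * f x)"
      unfolding call_def by (rule sum.cong) (use pos_ge in \<open>auto simp: algebra_simps\<close>)
    then show ?thesis by (simp add: sum_subtractf sum_distrib_left)
  qed
  then show "call_gap \<mu> 0 = 0" using assms unfolding call_gap_def below_target_def by simp
  have "call A f pos (s K) = 0" for f
    unfolding call_def by (rule sum.neutral) (use pos_le in auto)
  then show "call_gap \<mu> K = 0" unfolding call_gap_def by simp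
qed

lemma sum_over_grid:
  assumes "\<And>x. x \<in> off_grid \<Longrightarrow> f x = 0"
  shows "sum f A = (\<Sum>i\<le>K. f (gp i))"
proof -
  have "sum f A = sum f (gp ` {..K})"
    by (rule sum.mono_neutral_right[OF finite_A]) (use gp_in assms in \<open>auto simp: off_grid_def\<close>)
  also have "\<dots> = (\<Sum>i\<le>K. f (gp i))" by (simp add: sum.reindex[OF inj_gp])
  finally show ?thesis .
qed

lemma eq_target_if_no_positive_gap:
  assumes below: "below_target \<mu>" and on_grid: "off_grid_atoms \<mu> = {}" and no_gap: "positive_gaps \<mu> = {}"
  shows "x \<in> A \<Longrightarrow> \<mu> x = \<nu> x"
proof -
  have \<mu>_nonneg: "\<forall>x\<in>A. 0 \<le> \<mu> x" using below unfolding below_target_def by blast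
  have off: "\<mu> x = 0" "\<nu> x = 0" if "x \<in> off_grid" for x
    using that on_grid \<mu>_nonneg \<nu>_on_grid unfolding off_grid_atoms_def off_grid_def by force+
  have gap0: "call_gap \<mu> l = 0" if "l \<le> K" for l
    using that no_gap below unfolding positive_gaps_def below_target_def by force
  define D where "D i = \<mu> (gp i) - \<nu> (gp i)" for i
  have D0: "D i = 0" if "i \<le> K" for i
  proof (rule grid_measure_eq_0[OF s_strict_mono _ _ that])
    have "sum \<mu> A - sum \<nu> A = (\<Sum>x\<in>A. \<mu> x - \<nu> x)" by (simp add: sum_subtractf)
    also have "\<dots> = (\<Sum>i\<le>K. D i)" unfolding D_def by (rule sum_over_grid) (simp add: off)
    finally show "(\<Sum>i\<le>K. D i) = 0" using below unfolding below_target_def by simp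
  next
    fix l assume l: "l \<le> K"
    have "call A \<mu> pos (s l) - call A \<nu> pos (s l) = (\<Sum>x\<in>A. (\<mu> x - \<nu> x) * max 0 (pos x - s l))"
      unfolding call_def by (simp add: sum_subtractf algebra_simps)
    also have "\<dots> = (\<Sum>i\<le>K. D i * max 0 (s i - s l))"
      unfolding D_def by (subst sum_over_grid) (auto simp: off pos_gp)
    finally show "(\<Sum>i\<le>K. D i * max 0 (s i - s l)) = 0" using gap0[OF l] unfolding call_gap_def by simp
  qed
  show "x \<in> A \<Longrightarrow> \<mu> x = \<nu> x"
    using D0 off unfolding D_def off_grid_def by (cases "x \<in> gp ` {..K}") auto
qed

lemma descent_off_grid:
  assumes below: "below_target \<mu>" and x: "x \<in> off_grid_atoms \<mu>"
  shows "\<exists>\<mu>'. below_target \<mu>' \<and> defect \<mu>' < defect \<mu> \<and> (has_martingale_kernel \<mu>' \<longrightarrow> has_martingale_kernel \<mu>)"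
proof -
  have xA: "x \<in> A" and x_off: "x \<notin> gp ` {..K}" and x_pos: "0 < \<mu> x"
    using x unfolding off_grid_atoms_def off_grid_def by auto
  obtain k where k: "k < K" "s k \<le> pos x" "pos x \<le> s (Suc k)"
    using grid_bracket[OF K_pos pos_ge[OF xA] pos_le[OF xA]] .
  define p where "p = gp k"
  define q where "q = gp (Suc k)"
  have pA: "p \<in> A" and qA: "q \<in> A" and pos_p: "pos p = s k" and pos_q: "pos q = s (Suc k)"
    unfolding p_def q_def using gp_in pos_gp k by auto
  have dist: "x \<noteq> p" "x \<noteq> q" "p \<noteq> q" using x_off k gp_eq_iff[of k "Suc k"] unfolding p_def q_def by auto
  define lam where "lam = (s (Suc k) - pos x) / (s (Suc k) - s k)"
  have lam: "pos x = lam * s k + (1 - lam) * s (Suc k)" "0 \<le> lam" "lam \<le> 1"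
    using between_as_convex_combination[of "s k" "s (Suc k)" "pos x"] s_strict_mono[of k "Suc k"] k
    unfolding lam_def by auto
  define \<epsilon> where "\<epsilon> = \<mu> x"
  define \<alpha> where "\<alpha> = \<epsilon> * lam"
  define \<beta> where "\<beta> = \<epsilon> * (1 - lam)"
  have "\<alpha> * pos p + \<beta> * pos q = \<epsilon> * (lam * s k + (1 - lam) * s (Suc k))"
    unfolding \<alpha>_def \<beta>_def pos_p pos_q by (simp add: algebra_simps)
  then have mean: "\<alpha> * pos p + \<beta> * pos q = \<epsilon> * pos x" using lam(1) by simp
  have "0 \<le> \<alpha>" "0 \<le> \<beta>" "\<alpha> + \<beta> = \<epsilon>"
    unfolding \<alpha>_def \<beta>_def \<epsilon>_def using x_pos lam(2,3) by (simp_all add: algebra_simps)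
  note ab = this mean
  define \<mu>' where "\<mu>' = move_mass \<mu> x p q \<epsilon> \<alpha> \<beta>"
  have same_gaps: "call_gap \<mu>' l = call_gap \<mu> l" if "l \<le> K" for l
  proof -
    have "s l \<le> pos p \<or> pos q \<le> s l" using s_mono[of l k] s_mono[of "Suc k" l] k that pos_p pos_q by linarith
    then have "\<alpha> * max 0 (pos p - s l) + \<beta> * max 0 (pos q - s l) - \<epsilon> * max 0 (pos x - s l) = 0"
      using hinge_spread(2,3)[of "pos p" "pos x" "pos q" \<alpha> \<beta> \<epsilon> "s l"] ab k pos_p pos_q by auto
    then show ?thesis unfolding \<mu>'_def using call_gap_move_mass[OF xA pA qA] by simp
  qed
  have "below_target \<mu>'"
    unfolding \<mu>'_def using below same_gaps ab dist \<epsilon>_def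
    by (intro below_target_move_mass[OF below xA pA qA]) (auto simp: below_target_def \<mu>'_def)
  moreover have "defect \<mu>' < defect \<mu>"
  proof (rule defect_less)
    have "p \<notin> off_grid" "q \<notin> off_grid" unfolding off_grid_def p_def q_def using k by auto
    then have "off_grid_atoms \<mu>' = off_grid_atoms \<mu> - {x}"
      unfolding off_grid_atoms_def \<mu>'_def move_mass_def \<epsilon>_def using dist by auto
    then show "off_grid_atoms \<mu>' \<subset> off_grid_atoms \<mu> \<or> off_grid_atoms \<mu>' = off_grid_atoms \<mu> \<and>
      (positive_gaps \<mu>' \<subset> positive_gaps \<mu> \<or> positive_gaps \<mu>' \<subseteq> positive_gaps \<mu> \<and> gap_atoms \<mu>' \<subset> gap_atoms \<mu>)"
      using x by auto
  qed
  moreover have "has_martingale_kernel \<mu>' \<longrightarrow> has_martingale_kernel \<mu>"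
    using martingale_kernel_move_mass[OF finite_A xA pA qA dist _ _ ab] below pA qA
    unfolding \<mu>'_def below_target_def by blast
  ultimately show ?thesis by blast
qed

lemma grid_atom_in_positive_run:
  assumes below: "below_target \<mu>" and on_grid: "off_grid_atoms \<mu> = {}"
    and run: "p < l0" "l0 < q" "q \<le> K" "call_gap \<mu> p = 0" "call_gap \<mu> q = 0" "0 < call_gap \<mu> l0"
  shows "\<exists>k. p < k \<and> k < q \<and> 0 < \<mu> (gp k)"
proof (rule ccontr)
  assume none: "\<not> (\<exists>k. p < k \<and> k < q \<and> 0 < \<mu> (gp k))"
  have \<mu>_nonneg: "\<And>x. x \<in> A \<Longrightarrow> 0 \<le> \<mu> x" using below unfolding below_target_def by blast
  have outside: "pos z \<le> s p \<or> s q \<le> pos z" if z: "z \<in> A" "\<mu> z \<noteq> 0" for z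
  proof (cases "z \<in> off_grid")
    case True then show ?thesis using on_grid z \<mu>_nonneg[of z] unfolding off_grid_atoms_def by auto
  next
    case False
    then obtain i where i: "i \<le> K" "z = gp i" using z unfolding off_grid_def by auto
    have "0 < \<mu> (gp i)" using z i \<mu>_nonneg[of z] by auto
    then have "\<not> (p < i \<and> i < q)" using none by blast
    then have "i \<le> p \<or> q \<le> i" by linarith
    then show ?thesis using i pos_gp s_mono run by auto
  qed
  define lam where "lam = (s q - s l0) / (s q - s p)"
  have pq: "s p < s q" using s_strict_mono run by simp
  have lam: "s l0 = lam * s p + (1 - lam) * s q" "0 \<le> lam" "lam \<le> 1"
    using between_as_convex_combination[OF pq, of "s l0"] s_strict_mono[of p l0] s_strict_mono[of l0 q] run
    unfolding lam_def by auto
  have "call A \<mu> pos (s l0) = lam * call A \<mu> pos (s p) + (1 - lam) * call A \<mu> pos (s q)"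
    by (rule call_affine_outside[OF lam(2,3,1) less_imp_le[OF pq] outside])
  moreover have "call A \<nu> pos (s l0) \<le> lam * call A \<nu> pos (s p) + (1 - lam) * call A \<nu> pos (s q)"
    using call_convex[OF _ lam(2,3,1)] \<nu>_nonneg by blast
  ultimately have "call_gap \<mu> l0 \<le> lam * call_gap \<mu> p + (1 - lam) * call_gap \<mu> q"
    unfolding call_gap_def by (simp add: algebra_simps)
  then show False using run by simp
qed

definition spread_atom :: "('x \<Rightarrow> real) \<Rightarrow> nat \<Rightarrow> nat \<Rightarrow> nat \<Rightarrow> real \<Rightarrow> 'x \<Rightarrow> real" where
  "spread_atom \<mu> p k q \<epsilon> = move_mass \<mu> (gp k) (gp p) (gp q) \<epsilon>
     (\<epsilon> * ((s q - s k) / (s q - s p))) (\<epsilon> * (1 - (s q - s k) / (s q - s p)))"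

context
  fixes p k q :: nat
  assumes run: "p < k" "k < q" "q \<le> K"
begin

lemma spread_atom_weights:
  defines "lam \<equiv> (s q - s k) / (s q - s p)"
  assumes "0 \<le> \<epsilon>"
  shows "0 \<le> \<epsilon> * lam" "0 \<le> \<epsilon> * (1 - lam)" "\<epsilon> * lam + \<epsilon> * (1 - lam) = \<epsilon>"
    "\<epsilon> * lam * pos (gp p) + \<epsilon> * (1 - lam) * pos (gp q) = \<epsilon> * pos (gp k)"
proof -
  have "s p < s k" "s k < s q" using s_strict_mono run by auto
  then have "0 \<le> lam" "0 \<le> 1 - lam" "lam * pos (gp p) + (1 - lam) * pos (gp q) = pos (gp k)"
    using between_as_convex_combination[of "s p" "s q" "s k"] pos_gp run unfolding lam_def by auto
  then show "0 \<le> \<epsilon> * lam" "0 \<le> \<epsilon> * (1 - lam)" using assms(2) by simp_all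
  show "\<epsilon> * lam + \<epsilon> * (1 - lam) = \<epsilon>" by (simp add: algebra_simps)
  show "\<epsilon> * lam * pos (gp p) + \<epsilon> * (1 - lam) * pos (gp q) = \<epsilon> * pos (gp k)"
    using \<open>lam * pos (gp p) + (1 - lam) * pos (gp q) = pos (gp k)\<close>
    by (metis distrib_left mult.assoc)
qed

lemma spread_atom_points:
  shows "gp k \<in> A" "gp p \<in> A" "gp q \<in> A" "gp k \<noteq> gp p" "gp k \<noteq> gp q" "gp p \<noteq> gp q"
  using gp_in gp_eq_iff run by auto

lemma call_gap_spread_atom:
  "call_gap (spread_atom \<mu> p k q \<epsilon>) l = call_gap \<mu> l - \<epsilon> * tent (s p) (s k) (s q) (s l)"
  unfolding spread_atom_def using spread_atom_points run
  by (simp add: call_gap_move_mass pos_gp tent_def algebra_simps)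

lemma spread_atom_apply:
  "x \<notin> {gp p, gp k, gp q} \<Longrightarrow> spread_atom \<mu> p k q \<epsilon> x = \<mu> x"
  "spread_atom \<mu> p k q \<epsilon> (gp k) = \<mu> (gp k) - \<epsilon>"
  unfolding spread_atom_def move_mass_def using spread_atom_points by auto

lemma below_target_spread_atom:
  assumes "below_target \<mu>" "0 \<le> \<epsilon>" "\<epsilon> \<le> \<mu> (gp k)"
    and "\<forall>l\<le>K. 0 \<le> call_gap (spread_atom \<mu> p k q \<epsilon>) l"
  shows "below_target (spread_atom \<mu> p k q \<epsilon>)"
  using assms(4) unfolding spread_atom_def
  by (intro below_target_move_mass[OF assms(1) spread_atom_points(1-5) assms(3) spread_atom_weights[OF assms(2)]])

lemma has_martingale_kernel_spread_atom:
  assumes "below_target \<mu>" "0 \<le> \<epsilon>" "has_martingale_kernel (spread_atom \<mu> p k q \<epsilon>)"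
  shows "has_martingale_kernel \<mu>"
proof -
  have "0 \<le> \<mu> (gp p)" "0 \<le> \<mu> (gp q)"
    using assms(1) spread_atom_points unfolding below_target_def by auto
  with assms(3) show ?thesis unfolding spread_atom_def
    by (elim exE martingale_kernel_move_mass[OF finite_A spread_atom_points _ _ spread_atom_weights[OF assms(2)]])
qed

lemma tent_grid:
  shows tent_grid_nonneg: "0 \<le> tent (s p) (s k) (s q) (s l)"
    and tent_grid_eq_0: "l \<le> K \<Longrightarrow> l \<le> p \<or> q \<le> l \<Longrightarrow> tent (s p) (s k) (s q) (s l) = 0"
    and tent_grid_pos: "p < l \<Longrightarrow> l < q \<Longrightarrow> 0 < tent (s p) (s k) (s q) (s l)"
proof -
  have sk: "s p < s k" "s k < s q" using s_strict_mono run by auto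
  show "0 \<le> tent (s p) (s k) (s q) (s l)" by (rule tent_nonneg[OF sk])
  show "l \<le> K \<Longrightarrow> l \<le> p \<or> q \<le> l \<Longrightarrow> tent (s p) (s k) (s q) (s l) = 0"
    using tent_eq_0[OF sk] s_mono run by auto
  show "p < l \<Longrightarrow> l < q \<Longrightarrow> 0 < tent (s p) (s k) (s q) (s l)"
    using tent_pos[OF sk] s_strict_mono[of p l] s_strict_mono[of l q] run by simp
qed

lemma defect_spread_atom_less:
  assumes atom: "0 < \<mu> (gp k)" and ends: "call_gap \<mu> p = 0" "call_gap \<mu> q = 0"
    and inside: "\<And>i. p < i \<Longrightarrow> i < q \<Longrightarrow> 0 < call_gap \<mu> i" and \<epsilon>: "0 \<le> \<epsilon>"
    and closes: "\<epsilon> = \<mu> (gp k) \<or> (\<exists>l. p < l \<and> l < q \<and> call_gap (spread_atom \<mu> p k q \<epsilon>) l = 0)"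
  shows "defect (spread_atom \<mu> p k q \<epsilon>) < defect \<mu>"
proof (rule defect_less)
  define \<mu>' where "\<mu>' = spread_atom \<mu> p k q \<epsilon>"
  have gap': "call_gap \<mu>' l = call_gap \<mu> l - \<epsilon> * tent (s p) (s k) (s q) (s l)" for l
    unfolding \<mu>'_def by (rule call_gap_spread_atom)
  have "\<mu>' x = \<mu> x" if "x \<in> off_grid" for x
    using that run unfolding off_grid_def \<mu>'_def by (intro spread_atom_apply(1)) auto
  then have "off_grid_atoms \<mu>' = off_grid_atoms \<mu>" unfolding off_grid_atoms_def by auto
  moreover have "call_gap \<mu>' l \<le> call_gap \<mu> l" for l
    using gap' tent_grid_nonneg \<epsilon> by simp
  then have gaps: "positive_gaps \<mu>' \<subseteq> positive_gaps \<mu>"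
    unfolding positive_gaps_def by (auto intro: less_le_trans)
  moreover have "positive_gaps \<mu>' \<subset> positive_gaps \<mu> \<or> gap_atoms \<mu>' \<subset> gap_atoms \<mu>"
    using closes
  proof
    assume used_up: "\<epsilon> = \<mu> (gp k)"
    have "gap_atoms \<mu>' \<subseteq> gap_atoms \<mu> - {k}"
    proof
      fix l assume l: "l \<in> gap_atoms \<mu>'"
      then have lK: "l \<le> K" and gap_l: "0 < call_gap \<mu>' l" unfolding gap_atoms_def positive_gaps_def by auto
      have "l \<noteq> p" "l \<noteq> q" using gap_l gap' ends tent_grid_eq_0 run by auto
      moreover have "l \<noteq> k" using l spread_atom_apply(2) used_up unfolding gap_atoms_def \<mu>'_def by auto
      ultimately have "\<mu>' (gp l) = \<mu> (gp l)" unfolding \<mu>'_def using spread_atom_apply(1) gp_eq_iff lK run by auto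
      then show "l \<in> gap_atoms \<mu> - {k}" using l gaps \<open>l \<noteq> k\<close> unfolding gap_atoms_def by auto
    qed
    moreover have "k \<in> gap_atoms \<mu>" using atom inside[OF run(1,2)] run unfolding gap_atoms_def positive_gaps_def by simp
    ultimately show ?thesis by blast
  next
    assume "\<exists>l. p < l \<and> l < q \<and> call_gap (spread_atom \<mu> p k q \<epsilon>) l = 0"
    then obtain l where l: "p < l" "l < q" "call_gap \<mu>' l = 0" unfolding \<mu>'_def by blast
    then have "l \<notin> positive_gaps \<mu>'" unfolding positive_gaps_def by simp
    moreover have "l \<in> positive_gaps \<mu>" using inside[OF l(1,2)] l run unfolding positive_gaps_def by simp
    ultimately show ?thesis using gaps by blast
  qed
  ultimately show "off_grid_atoms \<mu>' \<subset> off_grid_atoms \<mu> \<or> off_grid_atoms \<mu>' = off_grid_atoms \<mu> \<and>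
    (positive_gaps \<mu>' \<subset> positive_gaps \<mu> \<or> positive_gaps \<mu>' \<subseteq> positive_gaps \<mu> \<and> gap_atoms \<mu>' \<subset> gap_atoms \<mu>)"
    by blast
qed

text \<open>The atom is spread as far as the call gap inside the run allows: either the atom is used up
  or some gap of the run closes.\<close>

lemma descent_spread_atom:
  assumes below: "below_target \<mu>" and atom: "0 < \<mu> (gp k)"
    and ends: "call_gap \<mu> p = 0" "call_gap \<mu> q = 0" and inside: "\<And>i. p < i \<Longrightarrow> i < q \<Longrightarrow> 0 < call_gap \<mu> i"
  shows "\<exists>\<mu>'. below_target \<mu>' \<and> defect \<mu>' < defect \<mu> \<and> (has_martingale_kernel \<mu>' \<longrightarrow> has_martingale_kernel \<mu>)"
proof -
  define ratio where "ratio l = call_gap \<mu> l / tent (s p) (s k) (s q) (s l)" for l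
  define m where "m = Min (ratio ` {p<..<q})"
  have ratio_pos: "0 < ratio l" if "p < l" "l < q" for l
    using inside[OF that] tent_grid_pos[OF that] unfolding ratio_def by simp
  have m_le: "m * tent (s p) (s k) (s q) (s l) \<le> call_gap \<mu> l" if "p < l" "l < q" for l
  proof -
    have "m \<le> ratio l" unfolding m_def using that by (intro Min_le) auto
    then show ?thesis using tent_grid_pos[OF that] unfolding ratio_def by (simp add: pos_le_divide_eq)
  qed
  obtain l1 where l1: "p < l1" "l1 < q" "m = ratio l1"
    using Min_in[of "ratio ` {p<..<q}"] run unfolding m_def by fastforce
  define \<epsilon> where "\<epsilon> = min (\<mu> (gp k)) m"
  have \<epsilon>: "0 \<le> \<epsilon>" "\<epsilon> \<le> \<mu> (gp k)" "\<epsilon> \<le> m" unfolding \<epsilon>_def using atom ratio_pos[OF l1(1,2)] l1(3) by auto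
  define \<mu>' where "\<mu>' = spread_atom \<mu> p k q \<epsilon>"
  have gap': "call_gap \<mu>' l = call_gap \<mu> l - \<epsilon> * tent (s p) (s k) (s q) (s l)" for l
    unfolding \<mu>'_def by (rule call_gap_spread_atom)
  have "0 \<le> call_gap \<mu>' l" if "l \<le> K" for l
  proof (cases "p < l \<and> l < q")
    case True
    then have "\<epsilon> * tent (s p) (s k) (s q) (s l) \<le> m * tent (s p) (s k) (s q) (s l)"
      using \<epsilon>(3) tent_grid_nonneg by (simp add: mult_right_mono)
    then show ?thesis using gap' m_le True by fastforce
  next
    case False
    then show ?thesis using gap' tent_grid_eq_0 that below unfolding below_target_def by auto
  qed
  then have "below_target \<mu>'" unfolding \<mu>'_def using below_target_spread_atom[OF below \<epsilon>(1,2)] by blast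
  moreover have "\<epsilon> = \<mu> (gp k) \<or> call_gap \<mu>' l1 = 0"
    using gap'[of l1] tent_grid_pos[OF l1(1,2)] l1(3) unfolding \<epsilon>_def ratio_def by (auto simp: min_def)
  then have "defect \<mu>' < defect \<mu>"
    unfolding \<mu>'_def using defect_spread_atom_less[OF atom ends inside \<epsilon>(1)] l1 by blast
  moreover have "has_martingale_kernel \<mu>' \<longrightarrow> has_martingale_kernel \<mu>"
    using has_martingale_kernel_spread_atom[OF below \<epsilon>(1)] unfolding \<mu>'_def by blast
  ultimately show ?thesis by blast
qed

end

lemma descent_positive_gap:
  assumes below: "below_target \<mu>" and on_grid: "off_grid_atoms \<mu> = {}" and gap: "l0 \<in> positive_gaps \<mu>"
  shows "\<exists>\<mu>'. below_target \<mu>' \<and> defect \<mu>' < defect \<mu> \<and> (has_martingale_kernel \<mu>' \<longrightarrow> has_martingale_kernel \<mu>)"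
proof -
  have l0: "l0 \<le> K" "0 < call_gap \<mu> l0" using gap unfolding positive_gaps_def by auto
  obtain p q where run: "p < l0" "l0 < q" "q \<le> K" "call_gap \<mu> p = 0" "call_gap \<mu> q = 0"
    and inside: "\<And>i. p < i \<Longrightarrow> i < q \<Longrightarrow> call_gap \<mu> i \<noteq> 0"
    using positive_run[of "call_gap \<mu>", OF call_gap_ends[OF below] l0] by blast
  obtain k where k: "p < k" "k < q" "0 < \<mu> (gp k)"
    using grid_atom_in_positive_run[OF below on_grid run l0(2)] by blast
  have "0 < call_gap \<mu> i" if "p < i" "i < q" for i
  proof -
    have "0 \<le> call_gap \<mu> i" using below that run unfolding below_target_def by simp
    then show ?thesis using inside[OF that] by simp
  qed
  then show ?thesis using descent_spread_atom[OF k(1,2) run(3) below k(3) run(4,5)] by blast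
qed

theorem martingale_kernel_exists:
  assumes "below_target \<mu>"
  shows "has_martingale_kernel \<mu>"
  using assms
proof (induction \<mu> rule: measure_induct_rule[of defect])
  case (less \<mu>)
  consider x where "x \<in> off_grid_atoms \<mu>" | l where "off_grid_atoms \<mu> = {}" "l \<in> positive_gaps \<mu>"
    | "off_grid_atoms \<mu> = {}" "positive_gaps \<mu> = {}" by blast
  then show ?case
  proof cases
    case 1 then show ?thesis using descent_off_grid[OF less.prems] less.IH by blast
  next
    case 2 then show ?thesis using descent_positive_gap[OF less.prems] less.IH by blast
  next
    case 3
    have "\<forall>x\<in>A. 0 \<le> \<mu> x" using less.prems unfolding below_target_def by blast
    then show ?thesis
      using martingale_kernel_diagonal[OF finite_A] eq_target_if_no_positive_gap[OF less.prems 3] by blast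
  qed
qed

end

section \<open>A grid measure with prescribed call values\<close>

lemma sum_greaterThanAtMost_diff:
  fixes f :: "nat \<Rightarrow> real"
  shows "l \<le> K \<Longrightarrow> (\<Sum>i\<in>{l<..K}. f i - f (i - 1)) = f K - f l"
proof (induction K)
  case (Suc K)
  show ?case
  proof (cases "l = Suc K")
    case False
    then have "{l<..Suc K} = insert (Suc K) {l<..K}" using Suc.prems by auto
    then show ?thesis using Suc False by simp
  qed simp
qed simp

lemma call_grid_step:
  fixes s \<nu> :: "nat \<Rightarrow> real"
  assumes s_mono: "\<And>i j. i < j \<Longrightarrow> j \<le> K \<Longrightarrow> s i < s j" and l: "l < K"
  shows "(\<Sum>i\<le>K. \<nu> i * max 0 (s i - s l))
           = (\<Sum>i\<le>K. \<nu> i * max 0 (s i - s (Suc l))) + (s (Suc l) - s l) * (\<Sum>i\<in>{l<..K}. \<nu> i)"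
proof -
  have "\<nu> i * max 0 (s i - s l) = \<nu> i * max 0 (s i - s (Suc l)) + (if l < i then (s (Suc l) - s l) * \<nu> i else 0)"
    if "i \<le> K" for i
  proof (cases "l < i")
    case True
    then have "s (Suc l) \<le> s i" using s_mono[of "Suc l" i] that by (cases "Suc l = i") auto
    moreover have "s l < s (Suc l)" using s_mono l by simp
    ultimately show ?thesis using True by (simp add: algebra_simps)
  next
    case False
    then have "s i \<le> s l" using s_mono[of i l] l by (cases "i = l") auto
    moreover have "s l < s (Suc l)" using s_mono l by simp
    ultimately show ?thesis using False by simp
  qed
  then have "(\<Sum>i\<le>K. \<nu> i * max 0 (s i - s l))
      = (\<Sum>i\<le>K. \<nu> i * max 0 (s i - s (Suc l))) + (\<Sum>i\<le>K. if l < i then (s (Suc l) - s l) * \<nu> i else 0)"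
    by (simp add: sum.distrib)
  also have "(\<Sum>i\<le>K. if l < i then (s (Suc l) - s l) * \<nu> i else 0) = (s (Suc l) - s l) * (\<Sum>i\<in>{l<..K}. \<nu> i)"
  proof -
    have "(\<Sum>i\<le>K. if l < i then (s (Suc l) - s l) * \<nu> i else 0)
        = (\<Sum>i\<in>{i\<in>{..K}. l < i}. (s (Suc l) - s l) * \<nu> i)"
      by (rule sum.inter_filter[symmetric]) simp
    also have "{i\<in>{..K}. l < i} = {l<..K}" by auto
    finally show ?thesis by (simp add: sum_distrib_left)
  qed
  finally show ?thesis .
qed

text \<open>A convex function \<open>D\<close> on the grid that vanishes at its right end is the call function of the
  measure whose atoms are the jumps of the slope of the piecewise linear interpolation of \<open>D\<close>;
  the first atom is enlarged to reach the prescribed mass \<open>M\<close>.\<close>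

lemma grid_measure_with_calls:
  fixes s D :: "nat \<Rightarrow> real" and K :: nat and M :: real
  assumes K_pos: "1 \<le> K" and s_mono: "\<And>i j. i < j \<Longrightarrow> j \<le> K \<Longrightarrow> s i < s j"
    and convex: "\<And>i. 0 < i \<Longrightarrow> i < K \<Longrightarrow>
        D i * (s (Suc i) - s (i - 1)) \<le> D (i - 1) * (s (Suc i) - s i) + D (Suc i) * (s i - s (i - 1))"
    and D_K: "D K = 0" and D_K1: "0 \<le> D (K - 1)"
    and mass: "(D 0 - D 1) / (s 1 - s 0) \<le> M"
  shows "\<exists>\<nu>. (\<forall>i\<le>K. 0 \<le> \<nu> i) \<and> (\<Sum>i\<le>K. \<nu> i) = M \<and> (\<forall>l\<le>K. (\<Sum>i\<le>K. \<nu> i * max 0 (s i - s l)) = D l)"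
proof -
  define slope where "slope i = (if i < K then (D (Suc i) - D i) / (s (Suc i) - s i) else 0)" for i
  define \<nu> where "\<nu> i = (if i = 0 then M + slope 0 else slope i - slope (i - 1))" for i
  have gap: "0 < s (Suc i) - s i" if "i < K" for i using s_mono[of i "Suc i"] that by simp
  have slope_mono: "slope (i - 1) \<le> slope i" if "0 < i" "i < K" for i
  proof -
    have "(D i - D (i - 1)) * (s (Suc i) - s i) \<le> (D (Suc i) - D i) * (s i - s (i - 1))"
      using convex[OF that] by (simp add: algebra_simps)
    moreover have "0 < s i - s (i - 1)" using gap[of "i - 1"] that by simp
    ultimately have "(D i - D (i - 1)) / (s i - s (i - 1)) \<le> (D (Suc i) - D i) / (s (Suc i) - s i)"
      using gap[of i] that by (simp add: field_simps)
    then show ?thesis using that unfolding slope_def by simp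
  qed
  have "0 \<le> \<nu> i" if iK: "i \<le> K" for i
  proof -
    consider "i = 0" | "0 < i" "i < K" | "i = K" "0 < i" using iK by linarith
    then show ?thesis
    proof cases
      case 1
      have "(D 1 - D 0) / (s 1 - s 0) = - ((D 0 - D 1) / (s 1 - s 0))" by (simp add: minus_divide_left)
      then show ?thesis using 1 mass K_pos unfolding \<nu>_def slope_def by simp
    next
      case 2
      then show ?thesis using slope_mono unfolding \<nu>_def by simp
    next
      case 3
      have "slope (K - 1) \<le> 0" using D_K D_K1 gap[of "K - 1"] K_pos unfolding slope_def by (simp add: divide_nonpos_pos)
      then show ?thesis using 3 unfolding \<nu>_def slope_def by simp
    qed
  qed
  moreover have tail: "(\<Sum>i\<in>{l<..K}. \<nu> i) = - slope l" if "l \<le> K" for l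
  proof -
    have "(\<Sum>i\<in>{l<..K}. \<nu> i) = (\<Sum>i\<in>{l<..K}. slope i - slope (i - 1))" unfolding \<nu>_def by (rule sum.cong) auto
    then show ?thesis using sum_greaterThanAtMost_diff[OF that, of slope] unfolding slope_def by simp
  qed
  moreover have "(\<Sum>i\<le>K. \<nu> i) = M"
  proof -
    have "{..K} = insert 0 {0<..K}" by auto
    then have "(\<Sum>i\<le>K. \<nu> i) = \<nu> 0 + (\<Sum>i\<in>{0<..K}. \<nu> i)" by simp
    then show ?thesis using tail[of 0] unfolding \<nu>_def by simp
  qed
  moreover have "(\<Sum>i\<le>K. \<nu> i * max 0 (s i - s l)) = D l" if "l \<le> K" for l
    using that
  proof (induction l rule: inc_induct)
    case base
    have "(\<Sum>i\<le>K. \<nu> i * max 0 (s i - s K)) = 0"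
      by (rule sum.neutral) (use s_mono in \<open>auto simp: le_less\<close>)
    then show ?case using D_K by simp
  next
    case (step l)
    then show ?case
      using call_grid_step[where s = s and K = K and \<nu> = \<nu>, OF s_mono] tail[of l] gap[of l] unfolding slope_def by simp
  qed
  ultimately show ?thesis by blast
qed

section \<open>Two-state problems with ordered, undominated actions\<close>

lemma two_point_mixture:
  fixes u :: "nat \<Rightarrow> nat \<Rightarrow> real"
  assumes "finite S" "i \<in> S" "i \<noteq> j" "0 \<le> w" "w \<le> 1" "j \<in> S \<or> w = 0"
  shows "prob_on S (\<lambda>a. if a = i then 1 - w else if a = j then w else 0)"
    and "mixed_util S u th (\<lambda>a. if a = i then 1 - w else if a = j then w else 0) = (1 - w) * u th i + w * u th j"
proof -
  define \<alpha> where "\<alpha> = (\<lambda>a. if a = i then 1 - w else if a = j then w else 0)"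
  have sum_\<alpha>: "(\<Sum>a\<in>S. \<alpha> a * f a) = (1 - w) * f i + w * f j" for f :: "nat \<Rightarrow> real"
  proof -
    have "(\<Sum>a\<in>S. \<alpha> a * f a) = (\<Sum>a\<in>S. (if a = i then (1 - w) * f i else 0) + (if a = j then w * f j else 0))"
      unfolding \<alpha>_def by (rule sum.cong) (use assms(3) in auto)
    also have "\<dots> = (1 - w) * f i + w * f j" using assms by (auto simp: sum.distrib)
    finally show ?thesis .
  qed
  show "prob_on S (\<lambda>a. if a = i then 1 - w else if a = j then w else 0)"
    unfolding prob_on_def \<alpha>_def[symmetric]
    using sum_\<alpha>[of "\<lambda>_. 1"] assms unfolding \<alpha>_def by auto
  show "mixed_util S u th (\<lambda>a. if a = i then 1 - w else if a = j then w else 0) = (1 - w) * u th i + w * u th j"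
    unfolding mixed_util_def \<alpha>_def[symmetric] by (rule sum_\<alpha>)
qed

definition threshold :: "nat \<Rightarrow> real \<Rightarrow> nat \<Rightarrow> real" where
  "threshold k lam l = (if l < k then 1 else if l = k then lam else 0)"

lemma sum_threshold:
  fixes f :: "nat \<Rightarrow> real"
  assumes "1 \<le> k" "k \<le> n" "k = n \<longrightarrow> lam = 0"
  shows "(\<Sum>l\<in>{1..<n}. threshold k lam l * f l) = (\<Sum>l\<in>{1..<k}. f l) + lam * f k"
proof -
  have split: "{1..<n} = {1..<k} \<union> {k..<n}" "{1..<k} \<inter> {k..<n} = {}" using assms by auto
  have "(\<Sum>l\<in>{1..<n}. threshold k lam l * f l)
      = (\<Sum>l\<in>{1..<k}. threshold k lam l * f l) + (\<Sum>l\<in>{k..<n}. threshold k lam l * f l)"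
    unfolding split(1) by (rule sum.union_disjoint) (use split(2) in auto)
  also have "(\<Sum>l\<in>{1..<k}. threshold k lam l * f l) = (\<Sum>l\<in>{1..<k}. f l)"
    unfolding threshold_def by (rule sum.cong) auto
  also have "(\<Sum>l\<in>{k..<n}. threshold k lam l * f l) = (\<Sum>l\<in>{k..<n}. if l = k then lam * f k else 0)"
    unfolding threshold_def by (rule sum.cong) auto
  also have "\<dots> = lam * f k" using assms by auto
  finally show ?thesis .
qed

text \<open>Actions are \<open>1..n\<close>, states are \<open>1, 2\<close>. The increments \<open>incr l\<close> are the payoffs of the
  \<open>l\<close>-th problem of the canonical decomposition.\<close>

locale ordered_problem =
  fixes n :: nat and u :: "nat \<Rightarrow> nat \<Rightarrow> real"
  assumes n_pos: "1 \<le> n"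
    and u1_strict_mono: "\<forall>i\<in>{1..<n}. u 1 i < u 1 (Suc i)"
    and u2_strict_antimono: "\<forall>i\<in>{1..<n}. u 2 i > u 2 (Suc i)"
    and u_first_zero: "u 1 1 = 0 \<and> u 2 1 = 0"
    and undominated: "\<forall>i\<in>{1..n}. \<not> (\<exists>\<alpha>. prob_on ({1..n} - {i}) \<alpha> \<and>
                    (\<forall>th\<in>{1,2}. u th i \<le> mixed_util ({1..n} - {i}) u th \<alpha>))"
begin

definition incr :: "nat \<Rightarrow> nat \<Rightarrow> real" where
  "incr l th = u th (Suc l) - u th l"

definition gain :: "nat \<Rightarrow> real" where
  "gain l = incr l 1"

definition loss :: "nat \<Rightarrow> real" where
  "loss l = - incr l 2"

definition slope :: "nat \<Rightarrow> real" where
  "slope l = loss l / gain l"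

text \<open>The probability of state 1 at which \<open>l\<close> and \<open>l + 1\<close> are equally good.\<close>

definition cutoff :: "nat \<Rightarrow> real" where
  "cutoff l = loss l / (gain l + loss l)"

definition belief_grid :: "nat \<Rightarrow> real" where
  "belief_grid i = (if i = 0 then 0 else if i < n then cutoff i else 1)"

lemma gain_loss_pos: "1 \<le> l \<Longrightarrow> l < n \<Longrightarrow> 0 < gain l \<and> 0 < loss l"
  using u1_strict_mono u2_strict_antimono unfolding gain_def loss_def incr_def by auto

lemma u_eq_sum_incr: "1 \<le> a \<Longrightarrow> th = 1 \<or> th = 2 \<Longrightarrow> u th a = (\<Sum>l\<in>{1..<a}. incr l th)"
proof (induction a rule: dec_induct)
  case base
  then show ?case using u_first_zero by auto
next
  case (step a)
  have "{1..<Suc a} = insert a {1..<a}" using step.hyps by auto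
  then show ?case using step by (simp add: incr_def)
qed

text \<open>If the slopes failed to increase at \<open>l\<close>, action \<open>l + 1\<close> would be weakly dominated by a
  mixture of \<open>l\<close> and \<open>l + 2\<close>.\<close>

lemma undominated_slope_step:
  assumes l: "1 \<le> l" "Suc l < n"
  shows "loss l * gain (Suc l) < loss (Suc l) * gain l"
proof (rule ccontr)
  assume neg: "\<not> loss l * gain (Suc l) < loss (Suc l) * gain l"
  have pos: "0 < gain l" "0 < loss l" "0 < gain (Suc l)" "0 < loss (Suc l)"
    using gain_loss_pos[of l] gain_loss_pos[of "Suc l"] l by auto
  define X where "X = gain l + gain (Suc l)"
  define w where "w = gain (Suc l) / X"
  define S where "S = {1..n} - {Suc l}"
  have X: "0 < X" and w: "0 \<le> w" "w \<le> 1" unfolding w_def X_def using pos by auto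
  have S: "finite S" "Suc (Suc l) \<in> S" "l \<in> S" "Suc (Suc l) \<noteq> l" unfolding S_def using l by auto
  note mixture = two_point_mixture[OF S(1,2,4) w disjI1[OF S(3)]]
  have dominated: "u th (Suc l) \<le> (1 - w) * u th (Suc (Suc l)) + w * u th l" if th: "th \<in> {1,2}" for th
  proof -
    have step: "u th (Suc l) = u th l + incr l th" "u th (Suc (Suc l)) = u th l + incr l th + incr (Suc l) th"
      unfolding incr_def by simp_all
    have "1 - w = gain l / X" using X unfolding w_def X_def by (simp add: field_simps)
    then have "(1 - w) * u th (Suc (Suc l)) + w * u th l = (gain l * u th (Suc (Suc l)) + gain (Suc l) * u th l) / X"
      unfolding w_def by (simp add: add_divide_distrib)
    also have "\<dots> = (X * u th l + gain l * (incr l th + incr (Suc l) th)) / X"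
      unfolding step X_def by (simp add: algebra_simps)
    also have "\<dots> = u th l + gain l * (incr l th + incr (Suc l) th) / X"
      using X by (simp add: add_divide_distrib)
    finally have mix: "(1 - w) * u th (Suc (Suc l)) + w * u th l = u th l + gain l * (incr l th + incr (Suc l) th) / X" .
    show ?thesis
    proof (cases "th = 1")
      case True
      then have "gain l * (incr l th + incr (Suc l) th) / X = gain l"
        using X unfolding gain_def X_def by simp
      then show ?thesis using mix step True unfolding gain_def by simp
    next
      case False
      then have "th = 2" using th by simp
      moreover have "gain l * (loss l + loss (Suc l)) \<le> loss l * X" unfolding X_def using neg by (simp add: algebra_simps)
      ultimately have "incr l th \<le> gain l * (incr l th + incr (Suc l) th) / X"
        using X unfolding loss_def by (simp add: field_simps)
      then show ?thesis using mix step by simp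
    qed
  qed
  define \<alpha> where "\<alpha> = (\<lambda>a. if a = Suc (Suc l) then 1 - w else if a = l then w else 0)"
  have "prob_on S \<alpha> \<and> (\<forall>th\<in>{1,2}. u th (Suc l) \<le> mixed_util S u th \<alpha>)"
    unfolding \<alpha>_def mixture(2) using mixture(1) dominated by blast
  moreover have "Suc l \<in> {1..n}" using l by simp
  ultimately show False using undominated unfolding S_def by blast
qed

lemma slope_mono:
  assumes "1 \<le> i" "i \<le> j" "j < n"
  shows "slope i \<le> slope j"
  using assms(2,3)
proof (induction j rule: dec_induct)
  case (step j)
  have j: "1 \<le> j" "Suc j < n" using assms(1) step by auto
  have "0 < gain j" "0 < gain (Suc j)" using gain_loss_pos[of j] gain_loss_pos[of "Suc j"] j by auto
  then have "slope j < slope (Suc j)"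
    using undominated_slope_step[OF j] unfolding slope_def by (simp add: field_simps mult.commute)
  then show ?case using step by simp
qed simp

lemma cutoff_strict_mono:
  assumes "1 \<le> i" "i < j" "j < n"
  shows "cutoff i < cutoff j"
proof -
  have cutoff_step: "cutoff l < cutoff (Suc l)" if "1 \<le> l" "Suc l < n" for l
  proof -
    have "0 < gain l" "0 < loss l" "0 < gain (Suc l)" "0 < loss (Suc l)"
      using gain_loss_pos[of l] gain_loss_pos[of "Suc l"] that by auto
    then show ?thesis using undominated_slope_step[OF that] unfolding cutoff_def by (simp add: field_simps)
  qed
  have "Suc i \<le> j" using assms by simp
  then show ?thesis using assms(3)
  proof (induction j rule: dec_induct)
    case base then show ?case using cutoff_step assms(1) by simp
  next
    case (step j) then show ?case using cutoff_step[of j] assms(1) by fastforce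
  qed
qed

lemma cutoff_range: "1 \<le> l \<Longrightarrow> l < n \<Longrightarrow> 0 < cutoff l \<and> cutoff l < 1"
  using gain_loss_pos[of l] unfolding cutoff_def by (auto simp: divide_less_eq)

lemma belief_grid_strict_mono: "i < j \<Longrightarrow> j \<le> n \<Longrightarrow> belief_grid i < belief_grid j"
  unfolding belief_grid_def using cutoff_range[of i] cutoff_range[of j] cutoff_strict_mono[of i j] by auto

lemma belief_grid_range: "0 \<le> belief_grid i \<and> belief_grid i \<le> 1"
  unfolding belief_grid_def using cutoff_range[of i] by auto

lemma belief_grid_0: "belief_grid 0 = 0" and belief_grid_n: "belief_grid n = 1"
  using n_pos unfolding belief_grid_def by auto

lemma loss_eq_cutoff: "1 \<le> l \<Longrightarrow> l < n \<Longrightarrow> loss l = (gain l + loss l) * belief_grid l"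
  using gain_loss_pos[of l] unfolding belief_grid_def cutoff_def by simp

lemma threshold_action:
  assumes k: "1 \<le> k" "k \<le> n" and lam: "0 \<le> lam" "lam \<le> 1" "k = n \<longrightarrow> lam = 0"
    and th: "th = 1 \<or> th = 2"
  shows "prob_on {1..n} (\<lambda>a. if a = k then 1 - lam else if a = Suc k then lam else 0)"
    and "mixed_util {1..n} u th (\<lambda>a. if a = k then 1 - lam else if a = Suc k then lam else 0)
           = (\<Sum>l\<in>{1..<n}. threshold k lam l * incr l th)"
proof -
  have mix: "finite {1..n}" "k \<in> {1..n}" "k \<noteq> Suc k" "Suc k \<in> {1..n} \<or> lam = 0" using k lam by auto
  show "prob_on {1..n} (\<lambda>a. if a = k then 1 - lam else if a = Suc k then lam else 0)"
    by (rule two_point_mixture(1)[OF mix(1-3) lam(1,2) mix(4)])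
  have "mixed_util {1..n} u th (\<lambda>a. if a = k then 1 - lam else if a = Suc k then lam else 0)
      = u th k + lam * incr k th"
    unfolding two_point_mixture(2)[OF mix(1-3) lam(1,2) mix(4)] incr_def by (simp add: algebra_simps)
  also have "\<dots> = (\<Sum>l\<in>{1..<n}. threshold k lam l * incr l th)"
    using u_eq_sum_incr[OF k(1) th] sum_threshold[OF k lam(3)] by simp
  finally show "mixed_util {1..n} u th (\<lambda>a. if a = k then 1 - lam else if a = Suc k then lam else 0)
      = (\<Sum>l\<in>{1..<n}. threshold k lam l * incr l th)" .
qed

lemma threshold_with_same_gain:
  assumes c: "\<forall>l\<in>{1..<n}. 0 \<le> c l \<and> c l \<le> 1"
  obtains k lam where "1 \<le> k" "k \<le> n" "0 \<le> lam" "lam \<le> 1" "k = n \<longrightarrow> lam = 0"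
    "(\<Sum>l\<in>{1..<n}. threshold k lam l * gain l) = (\<Sum>l\<in>{1..<n}. c l * gain l)"
proof -
  define X where "X = (\<Sum>l\<in>{1..<n}. c l * gain l)"
  define F where "F k = (\<Sum>l\<in>{1..<k}. gain l)" for k
  have gain_pos: "\<And>l. l \<in> {1..<n} \<Longrightarrow> 0 < gain l" using gain_loss_pos by auto
  have X_nonneg: "0 \<le> X" unfolding X_def using c gain_pos by (intro sum_nonneg) (simp add: less_imp_le)
  have X_le: "X \<le> F n" unfolding X_def F_def
    by (rule sum_mono) (use c gain_pos in \<open>simp add: mult_left_le_one_le less_imp_le\<close>)
  define KS where "KS = {k\<in>{1..n}. F k \<le> X}"
  define k where "k = Max KS"
  have finKS: "finite KS" unfolding KS_def by simp
  have "1 \<in> KS" unfolding KS_def F_def using n_pos X_nonneg by simp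
  then have "k \<in> KS" unfolding k_def using Max_in[OF finKS] by blast
  then have k: "1 \<le> k" "k \<le> n" "F k \<le> X" unfolding KS_def by auto
  have F_Suc: "F (Suc k) = F k + gain k" unfolding F_def using k(1) by (simp add: atLeastLessThanSuc)
  have X_less: "X < F (Suc k)" if "k < n"
  proof (rule ccontr)
    assume "\<not> X < F (Suc k)"
    then have "Suc k \<in> KS" using that unfolding KS_def by simp
    then show False using Max_ge[OF finKS] unfolding k_def[symmetric] by fastforce
  qed
  define lam where "lam = (if k < n then (X - F k) / gain k else 0)"
  have lam: "0 \<le> lam" "lam \<le> 1" "k = n \<longrightarrow> lam = 0" "X = F k + lam * gain k"
    using k X_less F_Suc gain_pos[of k] X_le unfolding lam_def by (auto simp: field_simps)
  have "(\<Sum>l\<in>{1..<n}. threshold k lam l * gain l) = X"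
    using sum_threshold[OF k(1,2) lam(3)] lam(4) unfolding F_def by simp
  then show ?thesis using that k(1,2) lam(1-3) unfolding X_def by blast
qed

text \<open>Moving weight to lower increments at equal gain only raises the state-2 payoff, since the
  loss-to-gain slopes increase.\<close>

lemma threshold_dominates:
  assumes c: "\<forall>l\<in>{1..<n}. 0 \<le> c l \<and> c l \<le> 1"
    and k: "1 \<le> k" "k \<le> n" and lam: "0 \<le> lam" "lam \<le> 1" "k = n \<longrightarrow> lam = 0"
    and same_gain: "(\<Sum>l\<in>{1..<n}. threshold k lam l * gain l) = (\<Sum>l\<in>{1..<n}. c l * gain l)"
  shows "(\<Sum>l\<in>{1..<n}. c l * incr l 2) \<le> (\<Sum>l\<in>{1..<n}. threshold k lam l * incr l 2)"
proof -
  define w where "w l = (threshold k lam l - c l) * gain l" for l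
  define T where "T = slope (if k < n then k else n - 1)"
  have gain_pos: "\<And>l. l \<in> {1..<n} \<Longrightarrow> 0 < gain l" using gain_loss_pos by auto
  have w_sum: "(\<Sum>l\<in>{1..<n}. w l) = 0"
    using same_gain unfolding w_def by (simp add: algebra_simps sum_subtractf)
  have w_T: "w l * (slope l - T) \<le> 0" if l: "l \<in> {1..<n}" for l
  proof -
    consider "l < k" | "l = k" | "k < l" by linarith
    then show ?thesis
    proof cases
      case 1
      then have "0 \<le> w l" unfolding w_def threshold_def using c l gain_pos[OF l] by simp
      moreover have "slope l \<le> T" unfolding T_def using slope_mono l 1 k by auto
      ultimately show ?thesis by (simp add: mult_nonneg_nonpos)
    next
      case 2
      then show ?thesis using l unfolding T_def by simp
    next
      case 3
      then have "w l \<le> 0" unfolding w_def threshold_def using c l gain_pos[OF l] by (simp add: mult_nonneg_nonneg)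
      moreover have "T \<le> slope l" unfolding T_def using slope_mono l 3 k by auto
      ultimately show ?thesis by (simp add: mult_nonpos_nonneg)
    qed
  qed
  have incr2: "incr l 2 = - (slope l * gain l)" if "l \<in> {1..<n}" for l
    using gain_pos[OF that] unfolding slope_def loss_def by simp
  have "(\<Sum>l\<in>{1..<n}. threshold k lam l * incr l 2) - (\<Sum>l\<in>{1..<n}. c l * incr l 2)
      = - (\<Sum>l\<in>{1..<n}. w l * slope l)"
    unfolding sum_subtractf[symmetric] sum_negf[symmetric]
    by (rule sum.cong) (simp_all add: incr2 w_def algebra_simps)
  moreover have "(\<Sum>l\<in>{1..<n}. w l * slope l) = (\<Sum>l\<in>{1..<n}. w l * (slope l - T))"
  proof -
    have "(\<Sum>l\<in>{1..<n}. w l * (slope l - T)) = (\<Sum>l\<in>{1..<n}. w l * slope l) - T * (\<Sum>l\<in>{1..<n}. w l)"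
      by (simp add: algebra_simps sum_subtractf sum_distrib_left)
    then show ?thesis using w_sum by simp
  qed
  moreover have "(\<Sum>l\<in>{1..<n}. w l * (slope l - T)) \<le> 0" using w_T by (intro sum_nonpos) auto
  ultimately show ?thesis by linarith
qed

lemma dominating_mixed_action:
  assumes c: "\<forall>l\<in>{1..<n}. 0 \<le> c l \<and> c l \<le> 1"
  shows "\<exists>\<alpha>. prob_on {1..n} \<alpha> \<and> (\<forall>th\<in>{1,2}. (\<Sum>l\<in>{1..<n}. c l * incr l th) \<le> mixed_util {1..n} u th \<alpha>)"
proof -
  obtain k lam where k: "1 \<le> k" "k \<le> n" and lam: "0 \<le> lam" "lam \<le> 1" "k = n \<longrightarrow> lam = 0"
    and same_gain: "(\<Sum>l\<in>{1..<n}. threshold k lam l * gain l) = (\<Sum>l\<in>{1..<n}. c l * gain l)"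
    using threshold_with_same_gain[OF c] .
  define \<alpha> where "\<alpha> = (\<lambda>a. if a = k then 1 - lam else if a = Suc k then lam else 0)"
  have "(\<Sum>l\<in>{1..<n}. c l * incr l th) \<le> mixed_util {1..n} u th \<alpha>" if "th \<in> {1,2}" for th
  proof -
    have "(\<Sum>l\<in>{1..<n}. c l * incr l th) \<le> (\<Sum>l\<in>{1..<n}. threshold k lam l * incr l th)"
      using that same_gain threshold_dominates[OF c k lam same_gain] unfolding gain_def by auto
    then show ?thesis unfolding \<alpha>_def using threshold_action(2)[OF k lam] that by auto
  qed
  then show ?thesis using threshold_action(1)[OF k lam, of 1] unfolding \<alpha>_def by blast
qed

end

section \<open>Experiments with two states\<close>

lemma sum_coupling_marginal:
  assumes "finite J" "\<forall>j\<in>J. finite (Y j)" "Q \<in> couplings Th J Y P" "th \<in> Th" "j \<in> J"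
  shows "(\<Sum>ys\<in>PiE J Y. Q th ys * g (ys j)) = (\<Sum>y\<in>Y j. P j th y * g y)"
proof -
  have fin: "finite (PiE J Y)" using assms(1,2) by (intro finite_PiE) auto
  have "(\<Sum>ys\<in>PiE J Y. Q th ys * g (ys j)) = (\<Sum>y\<in>Y j. \<Sum>ys\<in>{ys \<in> PiE J Y. ys j = y}. Q th ys * g (ys j))"
    by (rule sum.group[symmetric, OF fin]) (use assms(2,5) in \<open>auto simp: PiE_def Pi_def\<close>)
  also have "\<dots> = (\<Sum>y\<in>Y j. P j th y * g y)"
  proof (rule sum.cong[OF refl])
    fix y assume "y \<in> Y j"
    then have "(\<Sum>ys\<in>{ys \<in> PiE J Y. ys j = y}. Q th ys) = P j th y"
      using assms(3-5) unfolding couplings_def by auto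
    then show "(\<Sum>ys\<in>{ys \<in> PiE J Y. ys j = y}. Q th ys * g (ys j)) = P j th y * g y"
      by (simp add: sum_distrib_right[symmetric])
  qed
  finally show ?thesis .
qed

lemma Vsingle_binary:
  fixes Yj :: "'y set" and Pj :: "nat \<Rightarrow> 'y \<Rightarrow> real"
  assumes "finite Yj" and cu: "\<And>th a. cu th a = (if a = 1 then e th else 0)"
  shows "Vsingle {1,2} Yj Pj {0,1} cu = (\<Sum>y\<in>Yj. max 0 (Pj 1 y * e 1 + Pj 2 y * e 2))"
proof -
  define E where "E y = Pj 1 y * e 1 + Pj 2 y * e 2" for y
  define S where "S = {\<sigma> :: 'y \<Rightarrow> nat \<Rightarrow> real. \<forall>y\<in>Yj. prob_on {0,1} (\<sigma> y)}"
  define f where "f \<sigma> = (\<Sum>th\<in>{1,2}. \<Sum>y\<in>Yj. Pj th y * mixed_util {0,1} cu th (\<sigma> y))" for \<sigma> :: "'y \<Rightarrow> nat \<Rightarrow> real"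
  have f_eq: "f \<sigma> = (\<Sum>y\<in>Yj. \<sigma> y 1 * E y)" for \<sigma>
    unfolding f_def E_def mixed_util_def using cu by (simp add: sum.distrib[symmetric] algebra_simps)
  have "f \<sigma> \<le> (\<Sum>y\<in>Yj. max 0 (E y))" if "\<sigma> \<in> S" for \<sigma>
    unfolding f_eq
  proof (rule sum_mono)
    fix y assume "y \<in> Yj"
    then have "0 \<le> \<sigma> y 0" "0 \<le> \<sigma> y 1" "\<sigma> y 0 + \<sigma> y 1 = 1"
      using that unfolding S_def prob_on_def by auto
    then have "0 \<le> \<sigma> y 1" "\<sigma> y 1 \<le> 1" by linarith+
    then show "\<sigma> y 1 * E y \<le> max 0 (E y)"
      by (cases "0 \<le> E y") (simp_all add: mult_left_le_one_le mult_nonneg_nonpos)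
  qed
  moreover have "(\<lambda>y a. if a = 1 then (if 0 < E y then 1 else 0) else if a = 0 then (if 0 < E y then 0 else 1) else 0) \<in> S"
    unfolding S_def prob_on_def by auto
  moreover have "f (\<lambda>y a. if a = 1 then (if 0 < E y then 1 else 0) else if a = 0 then (if 0 < E y then 0 else 1) else 0)
      = (\<Sum>y\<in>Yj. max 0 (E y))"
    unfolding f_eq by (rule sum.cong) auto
  ultimately have "Sup (f ` S) = (\<Sum>y\<in>Yj. max 0 (E y))"
    by (intro cSup_eq_maximum) (auto intro: image_eqI[rotated])
  then show ?thesis unfolding Vsingle_def f_def S_def E_def by simp
qed

lemma payoff_lower_bound:
  assumes Q: "Q \<in> couplings {1,2} J Y P" and \<sigma>: "\<sigma> \<in> strategies J Y Ac" and "finite Ac"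
  shows "- (\<Sum>a\<in>Ac. \<bar>u 1 a\<bar> + \<bar>u 2 a\<bar>) \<le> payoff {1,2} J Y Ac u Q \<sigma>"
proof -
  have util: "- (\<Sum>a\<in>Ac. \<bar>u th a\<bar>) \<le> mixed_util Ac u th (\<sigma> ys)" if "ys \<in> PiE J Y" for th ys
  proof -
    have \<sigma>_ys: "\<And>a. 0 \<le> \<sigma> ys a" "sum (\<sigma> ys) Ac = 1" using \<sigma> that unfolding strategies_def prob_on_def by auto
    have "- \<bar>u th a\<bar> \<le> \<sigma> ys a * u th a" if "a \<in> Ac" for a
    proof -
      have "\<sigma> ys a \<le> 1" using member_le_sum[of a Ac "\<sigma> ys"] \<sigma>_ys that assms(3) by simp
      then have "- \<bar>u th a\<bar> \<le> \<sigma> ys a * (- \<bar>u th a\<bar>)" using \<sigma>_ys by (simp add: mult_left_le_one_le)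
      also have "\<dots> \<le> \<sigma> ys a * u th a" using \<sigma>_ys by (intro mult_left_mono) auto
      finally show ?thesis .
    qed
    then have "(\<Sum>a\<in>Ac. - \<bar>u th a\<bar>) \<le> mixed_util Ac u th (\<sigma> ys)"
      unfolding mixed_util_def by (intro sum_mono)
    then show ?thesis by (simp add: sum_negf)
  qed
  have Q_th: "\<And>th ys. th \<in> {1,2} \<Longrightarrow> 0 \<le> Q th ys" "\<And>th. th \<in> {1,2} \<Longrightarrow> sum (Q th) (PiE J Y) = 1"
    using Q unfolding couplings_def prob_on_def by auto
  have "(\<Sum>th\<in>{1,2}. \<Sum>ys\<in>PiE J Y. Q th ys * (- (\<Sum>a\<in>Ac. \<bar>u th a\<bar>))) \<le> payoff {1,2} J Y Ac u Q \<sigma>"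
    unfolding payoff_def using Q_th(1) util by (intro sum_mono mult_left_mono) auto
  moreover have "(\<Sum>ys\<in>PiE J Y. Q th ys * (- (\<Sum>a\<in>Ac. \<bar>u th a\<bar>))) = - (\<Sum>a\<in>Ac. \<bar>u th a\<bar>)"
    if "th \<in> {1,2}" for th
    by (subst sum_distrib_right[symmetric]) (simp add: Q_th(2)[OF that])
  then have "(\<Sum>th\<in>{1,2}. \<Sum>ys\<in>PiE J Y. Q th ys * (- (\<Sum>a\<in>Ac. \<bar>u th a\<bar>))) = - (\<Sum>a\<in>Ac. \<bar>u 1 a\<bar> + \<bar>u 2 a\<bar>)"
    by (simp add: sum.distrib)
  ultimately show ?thesis by simp
qed

lemma max0_sum_le:
  fixes f :: "'a \<Rightarrow> real"
  shows "max 0 (sum f I) \<le> (\<Sum>i\<in>I. max 0 (f i))"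
  using sum_mono[of I f "\<lambda>i. max 0 (f i)"] sum_nonneg[of I "\<lambda>i. max 0 (f i)"] by simp

text \<open>A joint experiment in which a grid point \<open>i\<close> is drawn with weight \<open>\<nu> i * g i\<close> in state 1 and
  \<open>\<nu> i * (1 - g i)\<close> in state 2, and then the signals of the experiments are drawn independently;
  \<open>W j y i\<close> is the joint weight of signal \<open>y\<close> of experiment \<open>j\<close> and grid point \<open>i\<close>.\<close>

locale grid_coupling =
  fixes J :: "nat set" and Y :: "nat \<Rightarrow> 'y set" and P :: "nat \<Rightarrow> nat \<Rightarrow> 'y \<Rightarrow> real"
    and N :: nat and g \<nu> :: "nat \<Rightarrow> real" and W :: "nat \<Rightarrow> 'y \<Rightarrow> nat \<Rightarrow> real"
  assumes finite_J: "finite J" and J_ne: "J \<noteq> {}" and finite_Y: "\<And>j. j \<in> J \<Longrightarrow> finite (Y j)"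
    and g_range: "\<And>i. 0 \<le> g i" "\<And>i. g i \<le> 1"
    and \<nu>_nonneg: "\<And>i. i \<le> N \<Longrightarrow> 0 \<le> \<nu> i"
    and \<nu>_state1: "(\<Sum>i\<le>N. \<nu> i * g i) = 1" and \<nu>_state2: "(\<Sum>i\<le>N. \<nu> i * (1 - g i)) = 1"
    and W_nonneg: "\<And>j y i. j \<in> J \<Longrightarrow> 0 \<le> W j y i"
    and W_state1: "\<And>j y. j \<in> J \<Longrightarrow> y \<in> Y j \<Longrightarrow> (\<Sum>i\<le>N. W j y i * g i) = P j 1 y"
    and W_state2: "\<And>j y. j \<in> J \<Longrightarrow> y \<in> Y j \<Longrightarrow> (\<Sum>i\<le>N. W j y i * (1 - g i)) = P j 2 y"
    and W_grid: "\<And>j i. j \<in> J \<Longrightarrow> i \<le> N \<Longrightarrow> (\<Sum>y\<in>Y j. W j y i) = \<nu> i"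
begin

definition state_weight :: "nat \<Rightarrow> nat \<Rightarrow> real" where
  "state_weight th i = (if th = 1 then g i else 1 - g i)"

text \<open>Where \<open>\<nu> i = 0\<close> the column \<open>W j \<cdot> i\<close> vanishes, so the junk quotient \<open>0\<close> is harmless.\<close>

definition signal_given_grid :: "nat \<Rightarrow> 'y \<Rightarrow> nat \<Rightarrow> real" where
  "signal_given_grid j y i = W j y i / \<nu> i"

definition profile_given_grid :: "(nat \<Rightarrow> 'y) \<Rightarrow> nat \<Rightarrow> real" where
  "profile_given_grid ys i = (\<Prod>j\<in>J. signal_given_grid j (ys j) i)"

definition joint :: "nat \<Rightarrow> (nat \<Rightarrow> 'y) \<Rightarrow> real" where
  "joint th ys = (if ys \<in> PiE J Y then \<Sum>i\<le>N. state_weight th i * \<nu> i * profile_given_grid ys i else 0)"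

lemma finite_profiles: "finite (PiE J Y)"
  using finite_J finite_Y by (intro finite_PiE) auto

lemma profile_given_grid_nonneg: "i \<le> N \<Longrightarrow> 0 \<le> profile_given_grid ys i"
  unfolding profile_given_grid_def signal_given_grid_def
  using W_nonneg \<nu>_nonneg by (intro prod_nonneg) auto

lemma sum_signal_given_grid: "j \<in> J \<Longrightarrow> i \<le> N \<Longrightarrow> (\<Sum>y\<in>Y j. signal_given_grid j y i) = (if \<nu> i = 0 then 0 else 1)"
  unfolding signal_given_grid_def using W_grid by (simp add: sum_divide_distrib[symmetric])

lemma \<nu>_signal_given_grid: "j \<in> J \<Longrightarrow> y \<in> Y j \<Longrightarrow> i \<le> N \<Longrightarrow> \<nu> i * signal_given_grid j y i = W j y i"
  using sum_nonneg_0[OF finite_Y, of j "\<lambda>y. W j y i"] W_nonneg W_grid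
  unfolding signal_given_grid_def by (cases "\<nu> i = 0") auto

lemma sum_profile_given_grid: "i \<le> N \<Longrightarrow> (\<Sum>ys\<in>PiE J Y. profile_given_grid ys i) = (if \<nu> i = 0 then 0 else 1)"
proof -
  assume i: "i \<le> N"
  have "(\<Sum>ys\<in>PiE J Y. profile_given_grid ys i) = (\<Prod>j\<in>J. \<Sum>y\<in>Y j. signal_given_grid j y i)"
    unfolding profile_given_grid_def by (rule prod_sum_PiE[symmetric]) (use finite_J finite_Y in auto)
  also have "\<dots> = (\<Prod>j\<in>J. if \<nu> i = 0 then 0 else 1)" using sum_signal_given_grid i by simp
  finally show ?thesis using finite_J J_ne by (simp add: card_gt_0_iff)
qed

lemma sum_profile_with_signal:
  assumes j0: "j0 \<in> J" "y0 \<in> Y j0" and i: "i \<le> N"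
  shows "\<nu> i * (\<Sum>ys\<in>{ys \<in> PiE J Y. ys j0 = y0}. profile_given_grid ys i) = W j0 y0 i"
proof -
  define f where "f j y = (if j = j0 \<and> y \<noteq> y0 then 0 else signal_given_grid j y i)" for j y
  have "(\<Sum>ys\<in>{ys \<in> PiE J Y. ys j0 = y0}. profile_given_grid ys i)
      = (\<Sum>ys\<in>PiE J Y. if ys j0 = y0 then profile_given_grid ys i else 0)"
    by (rule sum.inter_filter[OF finite_profiles])
  also have "\<dots> = (\<Sum>ys\<in>PiE J Y. \<Prod>j\<in>J. f j (ys j))"
  proof (rule sum.cong[OF refl])
    fix ys :: "nat \<Rightarrow> 'y"
    show "(if ys j0 = y0 then profile_given_grid ys i else 0) = (\<Prod>j\<in>J. f j (ys j))"
    proof (cases "ys j0 = y0")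
      case True
      then show ?thesis unfolding profile_given_grid_def f_def by (auto intro: prod.cong)
    next
      case False
      then have "(\<Prod>j\<in>J. f j (ys j)) = 0" using j0 finite_J unfolding f_def by (intro prod_zero) auto
      then show ?thesis using False by simp
    qed
  qed
  also have "\<dots> = (\<Prod>j\<in>J. \<Sum>y\<in>Y j. f j y)"
    by (rule prod_sum_PiE[symmetric]) (use finite_J finite_Y in auto)
  also have "\<dots> = (\<Sum>y\<in>Y j0. f j0 y) * (\<Prod>j\<in>J - {j0}. \<Sum>y\<in>Y j. f j y)"
    using finite_J j0(1) by (rule prod.remove)
  also have "(\<Sum>y\<in>Y j0. f j0 y) = (\<Sum>y\<in>Y j0. if y = y0 then signal_given_grid j0 y0 i else 0)"
    unfolding f_def by (rule sum.cong) auto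
  also have "\<dots> = signal_given_grid j0 y0 i" using finite_Y[OF j0(1)] j0(2) by simp
  also have "(\<Prod>j\<in>J - {j0}. \<Sum>y\<in>Y j. f j y) = (\<Prod>j\<in>J - {j0}. if \<nu> i = 0 then 0 else 1)"
    unfolding f_def using sum_signal_given_grid i by (intro prod.cong) auto
  finally show ?thesis
    using \<nu>_signal_given_grid[OF j0 i] by (cases "\<nu> i = 0") simp_all
qed

lemma sum_joint:
  assumes "S \<subseteq> PiE J Y"
  shows "(\<Sum>ys\<in>S. joint th ys) = (\<Sum>i\<le>N. state_weight th i * \<nu> i * (\<Sum>ys\<in>S. profile_given_grid ys i))"
proof -
  have "(\<Sum>ys\<in>S. joint th ys) = (\<Sum>ys\<in>S. \<Sum>i\<le>N. state_weight th i * \<nu> i * profile_given_grid ys i)"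
    unfolding joint_def using assms by (intro sum.cong) auto
  then show ?thesis by (simp add: sum.swap[of _ S] sum_distrib_left)
qed

lemma joint_in_couplings: "joint \<in> couplings {1,2} J Y P"
  unfolding couplings_def
proof (intro CollectI ballI conjI)
  fix th :: nat assume th: "th \<in> {1,2}"
  have weight: "0 \<le> state_weight th i" for i unfolding state_weight_def using g_range by simp
  have total: "(\<Sum>i\<le>N. state_weight th i * \<nu> i) = 1"
    using th \<nu>_state1 \<nu>_state2 unfolding state_weight_def by (auto simp: mult.commute)
  show "prob_on (PiE J Y) (joint th)"
    unfolding prob_on_def
  proof (intro conjI allI impI)
    fix ys show "0 \<le> joint th ys"
      unfolding joint_def using weight \<nu>_nonneg profile_given_grid_nonneg by (auto intro!: sum_nonneg)
  next
    fix ys assume "ys \<notin> PiE J Y" then show "joint th ys = 0" unfolding joint_def by simp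
  next
    have "sum (joint th) (PiE J Y) = (\<Sum>i\<le>N. state_weight th i * \<nu> i * (\<Sum>ys\<in>PiE J Y. profile_given_grid ys i))"
      by (rule sum_joint) simp
    also have "\<dots> = (\<Sum>i\<le>N. state_weight th i * \<nu> i)"
      by (rule sum.cong) (simp_all add: sum_profile_given_grid)
    finally have "sum (joint th) (PiE J Y) = (\<Sum>i\<le>N. state_weight th i * \<nu> i)" .
    then show "sum (joint th) (PiE J Y) = 1" using total by simp
  qed
next
  fix th :: nat and j y assume th: "th \<in> {1,2}" and j: "j \<in> J" and y: "y \<in> Y j"
  have "(\<Sum>ys\<in>{ys \<in> PiE J Y. ys j = y}. joint th ys) = (\<Sum>i\<le>N. state_weight th i * W j y i)"
    unfolding sum_joint[of "{ys \<in> PiE J Y. ys j = y}" th, simplified]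
    by (rule sum.cong) (simp_all add: mult.assoc sum_profile_with_signal[OF j y])
  also have "\<dots> = P j th y"
    using th W_state1[OF j y] W_state2[OF j y] unfolding state_weight_def by (auto simp: mult.commute)
  finally show "(\<Sum>ys\<in>{ys \<in> PiE J Y. ys j = y}. joint th ys) = P j th y" .
qed

lemma sum_hinge_joint_le:
  "(\<Sum>ys\<in>PiE J Y. max 0 (joint 1 ys * a + joint 2 ys * b)) \<le> (\<Sum>i\<le>N. \<nu> i * max 0 (g i * a + (1 - g i) * b))"
proof -
  have "(\<Sum>ys\<in>PiE J Y. max 0 (joint 1 ys * a + joint 2 ys * b))
      \<le> (\<Sum>ys\<in>PiE J Y. \<Sum>i\<le>N. \<nu> i * profile_given_grid ys i * max 0 (g i * a + (1 - g i) * b))"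
  proof (rule sum_mono)
    fix ys assume "ys \<in> PiE J Y"
    then have "joint 1 ys * a + joint 2 ys * b
        = (\<Sum>i\<le>N. g i * \<nu> i * profile_given_grid ys i * a + (1 - g i) * \<nu> i * profile_given_grid ys i * b)"
      unfolding joint_def state_weight_def by (simp add: sum_distrib_right sum.distrib)
    also have "\<dots> = (\<Sum>i\<le>N. \<nu> i * profile_given_grid ys i * (g i * a + (1 - g i) * b))"
      by (rule sum.cong) (simp_all add: algebra_simps)
    finally have "max 0 (joint 1 ys * a + joint 2 ys * b)
        = max 0 (\<Sum>i\<le>N. \<nu> i * profile_given_grid ys i * (g i * a + (1 - g i) * b))" by (rule arg_cong)
    also have "\<dots> \<le> (\<Sum>i\<le>N. max 0 (\<nu> i * profile_given_grid ys i * (g i * a + (1 - g i) * b)))"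
      by (rule max0_sum_le)
    also have "\<dots> = (\<Sum>i\<le>N. \<nu> i * profile_given_grid ys i * max 0 (g i * a + (1 - g i) * b))"
      using \<nu>_nonneg profile_given_grid_nonneg by (intro sum.cong) (simp_all add: max_mult_distrib_left)
    finally show "max 0 (joint 1 ys * a + joint 2 ys * b) \<le> \<dots>" .
  qed
  also have "\<dots> = (\<Sum>i\<le>N. \<Sum>ys\<in>PiE J Y. \<nu> i * max 0 (g i * a + (1 - g i) * b) * profile_given_grid ys i)"
    by (subst sum.swap) (simp only: ac_simps)
  also have "\<dots> = (\<Sum>i\<le>N. \<nu> i * max 0 (g i * a + (1 - g i) * b) * (\<Sum>ys\<in>PiE J Y. profile_given_grid ys i))"
    by (simp add: sum_distrib_left)
  also have "\<dots> = (\<Sum>i\<le>N. \<nu> i * max 0 (g i * a + (1 - g i) * b))"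
    using sum_profile_given_grid by (intro sum.cong) auto
  finally show ?thesis .
qed

end

locale two_state_experiments = ordered_problem n u for n u +
  fixes J :: "nat set" and Y :: "nat \<Rightarrow> 'y set" and P :: "nat \<Rightarrow> nat \<Rightarrow> 'y \<Rightarrow> real"
  assumes finite_J: "finite J" and J_ne: "J \<noteq> {}" and finite_Y: "\<forall>j\<in>J. finite (Y j)"
    and expP: "\<forall>j\<in>J. \<forall>th\<in>{1,2}. prob_on (Y j) (P j th)"
begin

definition mass :: "nat \<Rightarrow> 'y \<Rightarrow> real" where
  "mass j y = P j 1 y + P j 2 y"

text \<open>The posterior of state 1 under the uniform prior; it is junk (\<open>0\<close>) only where \<open>mass j y = 0\<close>.\<close>

definition posterior :: "nat \<Rightarrow> 'y \<Rightarrow> real" where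
  "posterior j y = P j 1 y / mass j y"

abbreviation posterior_call :: "nat \<Rightarrow> real \<Rightarrow> real" where
  "posterior_call j \<equiv> call (Y j) (mass j) (posterior j)"

definition binary_value :: "nat \<Rightarrow> nat \<Rightarrow> real" where
  "binary_value j l = (\<Sum>y\<in>Y j. max 0 (P j 1 y * incr l 1 + P j 2 y * incr l 2))"

definition best_binary_value :: "nat \<Rightarrow> real" where
  "best_binary_value l = Max ((\<lambda>j. binary_value j l) ` J)"

definition call_envelope :: "nat \<Rightarrow> real" where
  "call_envelope i = Max ((\<lambda>j. posterior_call j (belief_grid i)) ` J)"

definition envelope_measure :: "(nat \<Rightarrow> real) \<Rightarrow> bool" where
  "envelope_measure \<nu> \<longleftrightarrow> (\<forall>i\<le>n. 0 \<le> \<nu> i) \<and> (\<Sum>i\<le>n. \<nu> i) = 2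
     \<and> (\<forall>l\<le>n. (\<Sum>i\<le>n. \<nu> i * max 0 (belief_grid i - belief_grid l)) = call_envelope l)"

lemma P_nonneg: "j \<in> J \<Longrightarrow> th \<in> {1,2} \<Longrightarrow> 0 \<le> P j th y"
  and sum_P: "j \<in> J \<Longrightarrow> th \<in> {1,2} \<Longrightarrow> sum (P j th) (Y j) = 1"
  using expP unfolding prob_on_def by auto

lemma mass_nonneg: "j \<in> J \<Longrightarrow> 0 \<le> mass j y"
  unfolding mass_def using P_nonneg[of j 1] P_nonneg[of j 2] by simp

lemma mass_posterior: "j \<in> J \<Longrightarrow> mass j y * posterior j y = P j 1 y"
  using P_nonneg[of j 1 y] P_nonneg[of j 2 y] unfolding posterior_def mass_def by (cases "P j 1 y + P j 2 y = 0") auto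

lemma posterior_range: "j \<in> J \<Longrightarrow> 0 \<le> posterior j y \<and> posterior j y \<le> 1"
  using P_nonneg[of j 1 y] P_nonneg[of j 2 y] unfolding posterior_def mass_def
  by (cases "P j 1 y + P j 2 y = 0") (auto simp: divide_le_eq)

lemma sum_mass: "j \<in> J \<Longrightarrow> (\<Sum>y\<in>Y j. mass j y) = 2"
  unfolding mass_def using sum_P[of j 1] sum_P[of j 2] by (simp add: sum.distrib)

lemma sum_mass_posterior: "j \<in> J \<Longrightarrow> (\<Sum>y\<in>Y j. mass j y * posterior j y) = 1"
  using mass_posterior sum_P[of j 1] by simp

lemma posterior_call_0: "j \<in> J \<Longrightarrow> posterior_call j 0 = 1"
  unfolding call_def using posterior_range sum_mass_posterior by (simp cong: sum.cong)

lemma posterior_call_1: "j \<in> J \<Longrightarrow> posterior_call j 1 = 0"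
  unfolding call_def using posterior_range by (intro sum.neutral) auto

lemma posterior_call_lower: "j \<in> J \<Longrightarrow> 1 - 2 * t \<le> posterior_call j t"
proof -
  assume j: "j \<in> J"
  have "(\<Sum>y\<in>Y j. mass j y * (posterior j y - t)) \<le> posterior_call j t"
    unfolding call_def using mass_nonneg[OF j] by (intro sum_mono mult_left_mono) auto
  moreover have "(\<Sum>y\<in>Y j. mass j y * (posterior j y - t))
      = (\<Sum>y\<in>Y j. mass j y * posterior j y) - t * (\<Sum>y\<in>Y j. mass j y)"
    by (simp add: right_diff_distrib sum_subtractf sum_distrib_left mult.commute)
  ultimately show ?thesis using sum_mass_posterior[OF j] sum_mass[OF j] by simp
qed

lemma binary_value_eq_call:
  assumes j: "j \<in> J" and l: "1 \<le> l" "l < n"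
  shows "binary_value j l = (gain l + loss l) * posterior_call j (belief_grid l)"
proof -
  have gl: "0 < gain l + loss l" using gain_loss_pos l by (simp add: add_pos_pos)
  have "max 0 (P j 1 y * incr l 1 + P j 2 y * incr l 2)
      = (gain l + loss l) * (mass j y * max 0 (posterior j y - belief_grid l))" for y
  proof -
    have "(gain l + loss l) * mass j y * (posterior j y - belief_grid l)
        = (gain l + loss l) * (mass j y * posterior j y) - ((gain l + loss l) * belief_grid l) * mass j y"
      by (simp add: algebra_simps)
    also have "\<dots> = (gain l + loss l) * P j 1 y - loss l * mass j y"
      using mass_posterior[OF j, of y] loss_eq_cutoff[OF l] by simp
    also have "\<dots> = P j 1 y * incr l 1 + P j 2 y * incr l 2"
      unfolding gain_def loss_def mass_def by (simp add: algebra_simps)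
    finally have "P j 1 y * incr l 1 + P j 2 y * incr l 2 = (gain l + loss l) * mass j y * (posterior j y - belief_grid l)"
      by simp
    then show ?thesis using gl mass_nonneg[OF j, of y] by (simp add: max_mult_distrib_left mult.assoc)
  qed
  then show ?thesis unfolding binary_value_def call_def by (simp add: sum_distrib_left)
qed

lemma posterior_call_le_envelope: "j \<in> J \<Longrightarrow> posterior_call j (belief_grid i) \<le> call_envelope i"
  unfolding call_envelope_def using finite_J by (intro Max_ge) auto

lemma call_envelope_attained: "\<exists>j\<in>J. call_envelope i = posterior_call j (belief_grid i)"
proof -
  have "call_envelope i \<in> (\<lambda>j. posterior_call j (belief_grid i)) ` J"
    unfolding call_envelope_def using finite_J J_ne by (intro Max_in) auto
  then show ?thesis by auto
qed

lemma call_envelope_0: "call_envelope 0 = 1"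
  using call_envelope_attained[of 0] posterior_call_0 belief_grid_0 by auto

lemma call_envelope_n: "call_envelope n = 0"
  using call_envelope_attained[of n] posterior_call_1 belief_grid_n by auto

lemma call_envelope_nonneg: "0 \<le> call_envelope i"
proof -
  obtain j where "j \<in> J" "call_envelope i = posterior_call j (belief_grid i)"
    using call_envelope_attained by blast
  then show ?thesis using call_nonneg[of "Y j" "mass j"] mass_nonneg by simp
qed

lemma envelope_measure_exists: "\<exists>\<nu>. envelope_measure \<nu>"
  unfolding envelope_measure_def
proof (rule grid_measure_with_calls[where D = call_envelope and M = 2, OF n_pos belief_grid_strict_mono _ call_envelope_n call_envelope_nonneg])
  obtain j where j: "j \<in> J" using J_ne by auto
  have "0 < belief_grid 1" using belief_grid_strict_mono[of 0 1] n_pos belief_grid_0 by simp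
  moreover have "1 - 2 * belief_grid 1 \<le> call_envelope 1"
    using posterior_call_lower[OF j] posterior_call_le_envelope[OF j, of 1] by (rule order_trans)
  ultimately show "(call_envelope 0 - call_envelope 1) / (belief_grid 1 - belief_grid 0) \<le> 2"
    using call_envelope_0 belief_grid_0 by (simp add: divide_le_eq)
next
  fix i assume i: "0 < i" "i < n"
  obtain j where j: "j \<in> J" "call_envelope i = posterior_call j (belief_grid i)"
    using call_envelope_attained by blast
  have grid: "belief_grid (i - 1) < belief_grid i" "belief_grid i < belief_grid (Suc i)"
    using belief_grid_strict_mono i by auto
  have "call_envelope i * (belief_grid (Suc i) - belief_grid (i - 1))
      \<le> posterior_call j (belief_grid (i - 1)) * (belief_grid (Suc i) - belief_grid i)
        + posterior_call j (belief_grid (Suc i)) * (belief_grid i - belief_grid (i - 1))"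
    using call_three_point[where S = "Y j" and w = "mass j" and x = "posterior j", OF mass_nonneg[OF j(1)] grid] j(2)
    by simp
  also have "\<dots> \<le> call_envelope (i - 1) * (belief_grid (Suc i) - belief_grid i)
        + call_envelope (Suc i) * (belief_grid i - belief_grid (i - 1))"
    using posterior_call_le_envelope[OF j(1)] grid by (intro add_mono mult_right_mono) auto
  finally show "call_envelope i * (belief_grid (Suc i) - belief_grid (i - 1))
      \<le> call_envelope (i - 1) * (belief_grid (Suc i) - belief_grid i)
        + call_envelope (Suc i) * (belief_grid i - belief_grid (i - 1))" .
qed

lemma envelope_measure_mean:
  assumes "envelope_measure \<nu>"
  shows "(\<Sum>i\<le>n. \<nu> i * belief_grid i) = 1"
proof -
  have "(\<Sum>i\<le>n. \<nu> i * belief_grid i) = (\<Sum>i\<le>n. \<nu> i * max 0 (belief_grid i - belief_grid 0))"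
    using belief_grid_range belief_grid_0 by (intro sum.cong) auto
  then show ?thesis using assms call_envelope_0 unfolding envelope_measure_def by auto
qed

text \<open>By Strassen's theorem, the posterior distribution of each experiment, which lies below the
  envelope measure in the convex order, is a mean-preserving contraction of it.\<close>

lemma experiment_grid_kernel:
  assumes \<nu>: "envelope_measure \<nu>" and j: "j \<in> J"
  obtains w where "\<And>y i. 0 \<le> w y i"
    "\<And>y. y \<in> Y j \<Longrightarrow> (\<Sum>i\<le>n. w y i) = mass j y"
    "\<And>y. y \<in> Y j \<Longrightarrow> (\<Sum>i\<le>n. w y i * belief_grid i) = P j 1 y"
    "\<And>i. i \<le> n \<Longrightarrow> (\<Sum>y\<in>Y j. w y i) = \<nu> i"
proof -
  define pos :: "'y + nat \<Rightarrow> real" where "pos = case_sum (posterior j) belief_grid"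
  define \<nu>' :: "'y + nat \<Rightarrow> real" where "\<nu>' = case_sum (\<lambda>_. 0) \<nu>"
  define \<mu> :: "'y + nat \<Rightarrow> real" where "\<mu> = case_sum (mass j) (\<lambda>_. 0)"
  have fin: "finite (Y j)" using finite_Y j by simp
  have sum_Plus: "sum f (Y j <+> {..n}) = (\<Sum>y\<in>Y j. f (Inl y)) + (\<Sum>i\<le>n. f (Inr i))" for f :: "'y + nat \<Rightarrow> real"
    using fin by (simp add: sum.Plus)
  have \<nu>_nonneg: "\<And>i. i \<le> n \<Longrightarrow> 0 \<le> \<nu> i" using \<nu> unfolding envelope_measure_def by blast
  interpret G: grid_target "Y j <+> {..n}" Inr n belief_grid pos \<nu>'
    by unfold_locales
      (use fin n_pos \<nu>_nonneg posterior_range[OF j] belief_grid_range belief_grid_0 belief_grid_n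
        belief_grid_strict_mono in \<open>auto simp: pos_def \<nu>'_def\<close>)
  have "G.below_target \<mu>"
    unfolding G.below_target_def
  proof (intro conjI allI impI ballI)
    fix x assume "x \<in> Y j <+> {..n}" then show "0 \<le> \<mu> x" unfolding \<mu>_def using mass_nonneg[OF j] by auto
  next
    show "sum \<mu> (Y j <+> {..n}) = sum \<nu>' (Y j <+> {..n})"
      using sum_mass[OF j] \<nu> unfolding sum_Plus \<mu>_def \<nu>'_def envelope_measure_def by simp
    show "(\<Sum>x\<in>Y j <+> {..n}. \<mu> x * pos x) = (\<Sum>x\<in>Y j <+> {..n}. \<nu>' x * pos x)"
      using sum_mass_posterior[OF j] envelope_measure_mean[OF \<nu>] unfolding sum_Plus \<mu>_def \<nu>'_def pos_def by simp
  next
    fix l assume "l \<le> n"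
    then have "call (Y j <+> {..n}) \<nu>' pos (belief_grid l) = call_envelope l"
      using \<nu> unfolding call_def sum_Plus \<nu>'_def pos_def envelope_measure_def by simp
    moreover have "call (Y j <+> {..n}) \<mu> pos (belief_grid l) = posterior_call j (belief_grid l)"
      unfolding call_def sum_Plus \<mu>_def pos_def by simp
    ultimately show "0 \<le> G.call_gap \<mu> l"
      unfolding G.call_gap_def using posterior_call_le_envelope[OF j] by simp
  qed
  then obtain \<pi> where \<pi>: "martingale_kernel (Y j <+> {..n}) pos \<mu> \<nu>' \<pi>"
    using G.martingale_kernel_exists by blast
  note \<pi>_Plus = martingale_kernel_Plus[OF fin finite_atMost \<pi>]
  show thesis
  proof (rule that[of "\<lambda>y i. \<pi> (Inl y) (Inr i)"])
    show "\<And>y i. 0 \<le> \<pi> (Inl y) (Inr i)" using \<pi> unfolding martingale_kernel_def by blast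
    show "\<And>y. y \<in> Y j \<Longrightarrow> (\<Sum>i\<le>n. \<pi> (Inl y) (Inr i)) = mass j y"
      using \<pi>_Plus(1) unfolding \<nu>'_def \<mu>_def by simp
    show "\<And>y. y \<in> Y j \<Longrightarrow> (\<Sum>i\<le>n. \<pi> (Inl y) (Inr i) * belief_grid i) = P j 1 y"
      using \<pi>_Plus(2) mass_posterior[OF j] unfolding \<nu>'_def \<mu>_def pos_def by simp
    show "\<And>i. i \<le> n \<Longrightarrow> (\<Sum>y\<in>Y j. \<pi> (Inl y) (Inr i)) = \<nu> i"
      using \<pi>_Plus(3) unfolding \<nu>'_def \<mu>_def by simp
  qed
qed

lemma best_binary_value_eq_envelope:
  assumes l: "1 \<le> l" "l < n"
  shows "best_binary_value l = (gain l + loss l) * call_envelope l"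
proof -
  have gl: "0 \<le> gain l + loss l" using gain_loss_pos[OF l] by simp
  have "(gain l + loss l) * call_envelope l
      = Max ((\<lambda>z. (gain l + loss l) * z) ` (\<lambda>j. posterior_call j (belief_grid l)) ` J)"
    unfolding call_envelope_def using gl finite_J J_ne by (intro mono_Max_commute) (auto simp: mono_def mult_left_mono)
  also have "\<dots> = best_binary_value l"
    unfolding best_binary_value_def image_image using binary_value_eq_call[OF _ l] by (intro arg_cong[where f = Max] image_cong) auto
  finally show ?thesis by simp
qed

text \<open>The joint experiment that reveals no more than the envelope measure: given a grid point,
  the experiments are conditionally independent.\<close>

lemma exists_coupling_below_best:
  "\<exists>Q\<in>couplings {1,2} J Y P. \<forall>l\<in>{1..<n}.
      (\<Sum>ys\<in>PiE J Y. max 0 (Q 1 ys * incr l 1 + Q 2 ys * incr l 2)) \<le> best_binary_value l"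
proof -
  obtain \<nu> where \<nu>: "envelope_measure \<nu>" using envelope_measure_exists by blast
  have "\<exists>w. (\<forall>y i. 0 \<le> w y i) \<and> (\<forall>y\<in>Y j. (\<Sum>i\<le>n. w y i) = mass j y \<and> (\<Sum>i\<le>n. w y i * belief_grid i) = P j 1 y)
      \<and> (\<forall>i\<le>n. (\<Sum>y\<in>Y j. w y i) = \<nu> i)" if "j \<in> J" for j
    by (rule experiment_grid_kernel[OF \<nu> that]) blast
  then have "\<forall>j\<in>J. \<exists>w. (\<forall>y i. 0 \<le> w y i)
      \<and> (\<forall>y\<in>Y j. (\<Sum>i\<le>n. w y i) = mass j y \<and> (\<Sum>i\<le>n. w y i * belief_grid i) = P j 1 y)
      \<and> (\<forall>i\<le>n. (\<Sum>y\<in>Y j. w y i) = \<nu> i)" by blast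
  then obtain W where W: "\<forall>j\<in>J. (\<forall>y i. 0 \<le> W j y i)
      \<and> (\<forall>y\<in>Y j. (\<Sum>i\<le>n. W j y i) = mass j y \<and> (\<Sum>i\<le>n. W j y i * belief_grid i) = P j 1 y)
      \<and> (\<forall>i\<le>n. (\<Sum>y\<in>Y j. W j y i) = \<nu> i)"
    by (rule bchoice[elim_format]) blast
  have \<nu>_facts: "\<And>i. i \<le> n \<Longrightarrow> 0 \<le> \<nu> i" "(\<Sum>i\<le>n. \<nu> i) = 2" using \<nu> unfolding envelope_measure_def by auto
  interpret C: grid_coupling J Y P n belief_grid \<nu> W
  proof
    show "(\<Sum>i\<le>n. \<nu> i * belief_grid i) = 1" by (rule envelope_measure_mean[OF \<nu>])
    then show "(\<Sum>i\<le>n. \<nu> i * (1 - belief_grid i)) = 1"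
      using \<nu>_facts(2) by (simp add: right_diff_distrib sum_subtractf)
    show "\<And>j y. j \<in> J \<Longrightarrow> y \<in> Y j \<Longrightarrow> (\<Sum>i\<le>n. W j y i * (1 - belief_grid i)) = P j 2 y"
      using W unfolding mass_def by (simp add: right_diff_distrib sum_subtractf)
  qed (use finite_J J_ne finite_Y belief_grid_range \<nu>_facts(1) W in auto)
  have "(\<Sum>ys\<in>PiE J Y. max 0 (C.joint 1 ys * incr l 1 + C.joint 2 ys * incr l 2)) \<le> best_binary_value l"
    if l: "1 \<le> l" "l < n" for l
  proof -
    have "belief_grid i * incr l 1 + (1 - belief_grid i) * incr l 2
        = (gain l + loss l) * (belief_grid i - belief_grid l)" for i
      using loss_eq_cutoff[OF l] unfolding gain_def loss_def by (simp add: algebra_simps)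
    moreover have "0 \<le> gain l + loss l" using gain_loss_pos[OF l] by simp
    ultimately have "max 0 (belief_grid i * incr l 1 + (1 - belief_grid i) * incr l 2)
        = (gain l + loss l) * max 0 (belief_grid i - belief_grid l)" for i
      by (simp add: max_mult_distrib_left)
    then have "(\<Sum>i\<le>n. \<nu> i * max 0 (belief_grid i * incr l 1 + (1 - belief_grid i) * incr l 2))
        = (gain l + loss l) * (\<Sum>i\<le>n. \<nu> i * max 0 (belief_grid i - belief_grid l))"
      by (simp add: sum_distrib_left mult.left_commute)
    also have "\<dots> = best_binary_value l"
      using \<nu> l best_binary_value_eq_envelope[OF l] unfolding envelope_measure_def by simp
    finally show ?thesis using C.sum_hinge_joint_le[of "incr l 1" "incr l 2"] by linarith
  qed
  then show ?thesis using C.joint_in_couplings by (intro bexI[of _ C.joint]) auto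
qed

lemma payoff_le_sum_hinge:
  assumes Q: "Q \<in> couplings {1,2} J Y P" and \<sigma>: "\<sigma> \<in> strategies J Y {1..n}"
  shows "payoff {1,2} J Y {1..n} u Q \<sigma> \<le> (\<Sum>l\<in>{1..<n}. \<Sum>ys\<in>PiE J Y. max 0 (Q 1 ys * incr l 1 + Q 2 ys * incr l 2))"
proof -
  define e where "e ys l = Q 1 ys * incr l 1 + Q 2 ys * incr l 2" for ys l
  have "Q 1 ys * mixed_util {1..n} u 1 (\<sigma> ys) + Q 2 ys * mixed_util {1..n} u 2 (\<sigma> ys) \<le> (\<Sum>l\<in>{1..<n}. max 0 (e ys l))"
    if ys: "ys \<in> PiE J Y" for ys
  proof -
    have \<sigma>_ys: "\<And>a. 0 \<le> \<sigma> ys a" "sum (\<sigma> ys) {1..n} = 1" using \<sigma> ys unfolding strategies_def prob_on_def by auto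
    have util: "mixed_util {1..n} u th (\<sigma> ys) = (\<Sum>a\<in>{1..n}. \<sigma> ys a * (\<Sum>l\<in>{1..<a}. incr l th))"
      if "th = 1 \<or> th = 2" for th
      unfolding mixed_util_def by (rule sum.cong) (use u_eq_sum_incr that in auto)
    have "Q 1 ys * mixed_util {1..n} u 1 (\<sigma> ys) + Q 2 ys * mixed_util {1..n} u 2 (\<sigma> ys)
        = (\<Sum>a\<in>{1..n}. \<sigma> ys a * (Q 1 ys * (\<Sum>l\<in>{1..<a}. incr l 1) + Q 2 ys * (\<Sum>l\<in>{1..<a}. incr l 2)))"
      unfolding util[OF disjI1[OF refl]] util[OF disjI2[OF refl]]
      by (simp add: sum_distrib_left sum.distrib algebra_simps)
    also have "\<dots> = (\<Sum>a\<in>{1..n}. \<sigma> ys a * (\<Sum>l\<in>{1..<a}. e ys l))"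
      unfolding e_def by (simp add: sum_distrib_left sum.distrib)
    also have "\<dots> \<le> (\<Sum>a\<in>{1..n}. \<sigma> ys a * (\<Sum>l\<in>{1..<n}. max 0 (e ys l)))"
    proof (intro sum_mono mult_left_mono)
      fix a assume "a \<in> {1..n}"
      then have "(\<Sum>l\<in>{1..<a}. e ys l) \<le> (\<Sum>l\<in>{1..<a}. max 0 (e ys l))"
        "(\<Sum>l\<in>{1..<a}. max 0 (e ys l)) \<le> (\<Sum>l\<in>{1..<n}. max 0 (e ys l))"
        by (auto intro!: sum_mono sum_mono2)
      then show "(\<Sum>l\<in>{1..<a}. e ys l) \<le> (\<Sum>l\<in>{1..<n}. max 0 (e ys l))" by linarith
    qed (use \<sigma>_ys in auto)
    also have "\<dots> = (\<Sum>l\<in>{1..<n}. max 0 (e ys l))" using \<sigma>_ys by (simp add: sum_distrib_right[symmetric])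
    finally show ?thesis .
  qed
  then have "payoff {1,2} J Y {1..n} u Q \<sigma> \<le> (\<Sum>ys\<in>PiE J Y. \<Sum>l\<in>{1..<n}. max 0 (e ys l))"
    unfolding payoff_def by (simp add: sum.distrib[symmetric] sum_mono)
  also have "\<dots> = (\<Sum>l\<in>{1..<n}. \<Sum>ys\<in>PiE J Y. max 0 (e ys l))" by (rule sum.swap)
  finally show ?thesis unfolding e_def .
qed

lemma INF_payoff_le_sum_best:
  assumes \<sigma>: "\<sigma> \<in> strategies J Y {1..n}"
  shows "(INF Q\<in>couplings {1,2} J Y P. payoff {1,2} J Y {1..n} u Q \<sigma>) \<le> (\<Sum>l\<in>{1..<n}. best_binary_value l)"
proof -
  obtain Q where Q: "Q \<in> couplings {1,2} J Y P"
    and below: "\<forall>l\<in>{1..<n}. (\<Sum>ys\<in>PiE J Y. max 0 (Q 1 ys * incr l 1 + Q 2 ys * incr l 2)) \<le> best_binary_value l"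
    using exists_coupling_below_best by blast
  have "bdd_below ((\<lambda>Q. payoff {1,2} J Y {1..n} u Q \<sigma>) ` couplings {1,2} J Y P)"
    using payoff_lower_bound[OF _ \<sigma>] unfolding bdd_below_def by blast
  then have "(INF Q\<in>couplings {1,2} J Y P. payoff {1,2} J Y {1..n} u Q \<sigma>) \<le> payoff {1,2} J Y {1..n} u Q \<sigma>"
    by (rule cINF_lower[OF _ Q])
  also have "\<dots> \<le> (\<Sum>l\<in>{1..<n}. best_binary_value l)"
    using payoff_le_sum_hinge[OF Q \<sigma>] below sum_mono[of "{1..<n}"] by (meson order_trans)
  finally show ?thesis .
qed

lemma sum_coupling_separate_decisions:
  assumes Q: "Q \<in> couplings {1,2} J Y P" and jl: "\<And>l. jl l \<in> J"
  shows "(\<Sum>th\<in>{1,2}. \<Sum>ys\<in>PiE J Y. Q th ys * (\<Sum>l\<in>{1..<n}. d l (ys (jl l)) * incr l th))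
       = (\<Sum>l\<in>{1..<n}. \<Sum>y\<in>Y (jl l). d l y * (P (jl l) 1 y * incr l 1 + P (jl l) 2 y * incr l 2))"
proof -
  have marginal: "(\<Sum>ys\<in>PiE J Y. Q th ys * (\<Sum>l\<in>{1..<n}. d l (ys (jl l)) * incr l th))
      = (\<Sum>l\<in>{1..<n}. \<Sum>y\<in>Y (jl l). P (jl l) th y * (d l y * incr l th))" if th: "th \<in> {1,2}" for th
  proof -
    have "(\<Sum>ys\<in>PiE J Y. Q th ys * (\<Sum>l\<in>{1..<n}. d l (ys (jl l)) * incr l th))
        = (\<Sum>l\<in>{1..<n}. \<Sum>ys\<in>PiE J Y. Q th ys * (d l (ys (jl l)) * incr l th))"
      unfolding sum_distrib_left by (rule sum.swap)
    also have "\<dots> = (\<Sum>l\<in>{1..<n}. \<Sum>y\<in>Y (jl l). P (jl l) th y * (d l y * incr l th))"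
      by (intro sum.cong refl sum_coupling_marginal[OF finite_J finite_Y Q th jl])
    finally show ?thesis .
  qed
  have "(\<Sum>th\<in>{1,2}. \<Sum>ys\<in>PiE J Y. Q th ys * (\<Sum>l\<in>{1..<n}. d l (ys (jl l)) * incr l th))
      = (\<Sum>th\<in>{1,2}. \<Sum>l\<in>{1..<n}. \<Sum>y\<in>Y (jl l). P (jl l) th y * (d l y * incr l th))"
    using marginal by (intro sum.cong) auto
  also have "\<dots> = (\<Sum>l\<in>{1..<n}. \<Sum>th\<in>{1,2}. \<Sum>y\<in>Y (jl l). P (jl l) th y * (d l y * incr l th))"
    by (rule sum.swap)
  also have "\<dots> = (\<Sum>l\<in>{1..<n}. \<Sum>y\<in>Y (jl l). d l y * (P (jl l) 1 y * incr l 1 + P (jl l) 2 y * incr l 2))"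
    by (simp add: sum.distrib[symmetric] algebra_simps)
  finally show ?thesis .
qed

text \<open>Each binary problem is decided on the signal of one of its best experiments; undominatedness
  turns these separate decisions into a single mixed action.\<close>

lemma strategy_attaining_best:
  obtains \<sigma> where "\<sigma> \<in> strategies J Y {1..n}"
    "\<And>Q. Q \<in> couplings {1,2} J Y P \<Longrightarrow> (\<Sum>l\<in>{1..<n}. best_binary_value l) \<le> payoff {1,2} J Y {1..n} u Q \<sigma>"
proof -
  have "\<exists>j. j \<in> J \<and> best_binary_value l = binary_value j l" for l
  proof -
    have "best_binary_value l \<in> (\<lambda>j. binary_value j l) ` J"
      unfolding best_binary_value_def using finite_J J_ne by (intro Max_in) auto
    then show ?thesis by auto
  qed
  then obtain jl where jl: "\<And>l. jl l \<in> J" "\<And>l. best_binary_value l = binary_value (jl l) l" by metis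
  define E where "E l y = P (jl l) 1 y * incr l 1 + P (jl l) 2 y * incr l 2" for l y
  define ind where "ind l y = (if 0 < E l y then 1 else 0 :: real)" for l y
  have "\<exists>\<alpha>. prob_on {1..n} \<alpha> \<and> (\<forall>th\<in>{1,2}. (\<Sum>l\<in>{1..<n}. ind l (ys (jl l)) * incr l th) \<le> mixed_util {1..n} u th \<alpha>)"
    for ys :: "nat \<Rightarrow> 'y"
    by (rule dominating_mixed_action) (simp add: ind_def)
  then obtain \<sigma> where \<sigma>: "\<And>ys. prob_on {1..n} (\<sigma> ys)"
    "\<And>ys th. th \<in> {1,2} \<Longrightarrow> (\<Sum>l\<in>{1..<n}. ind l (ys (jl l)) * incr l th) \<le> mixed_util {1..n} u th (\<sigma> ys)"
    by metis
  have "(\<Sum>l\<in>{1..<n}. best_binary_value l) \<le> payoff {1,2} J Y {1..n} u Q \<sigma>"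
    if Q: "Q \<in> couplings {1,2} J Y P" for Q
  proof -
    have "(\<Sum>l\<in>{1..<n}. best_binary_value l) = (\<Sum>l\<in>{1..<n}. \<Sum>y\<in>Y (jl l). ind l y * E l y)"
      unfolding jl(2) binary_value_def E_def[symmetric] ind_def by (intro sum.cong) auto
    also have "\<dots> = (\<Sum>th\<in>{1,2}. \<Sum>ys\<in>PiE J Y. Q th ys * (\<Sum>l\<in>{1..<n}. ind l (ys (jl l)) * incr l th))"
      unfolding E_def by (rule sum_coupling_separate_decisions[OF Q jl(1), symmetric])
    also have "\<dots> \<le> payoff {1,2} J Y {1..n} u Q \<sigma>"
      unfolding payoff_def using Q \<sigma>(2) unfolding couplings_def prob_on_def
      by (intro sum_mono mult_left_mono) auto
    finally show ?thesis .
  qed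
  moreover have "\<sigma> \<in> strategies J Y {1..n}" unfolding strategies_def using \<sigma>(1) by blast
  ultimately show thesis using that by blast
qed

theorem Vmulti_eq_sum_best: "Vmulti {1,2} J Y P {1..n} u = (\<Sum>l\<in>{1..<n}. best_binary_value l)"
proof -
  obtain \<sigma> where \<sigma>: "\<sigma> \<in> strategies J Y {1..n}"
    and attains: "\<And>Q. Q \<in> couplings {1,2} J Y P \<Longrightarrow> (\<Sum>l\<in>{1..<n}. best_binary_value l) \<le> payoff {1,2} J Y {1..n} u Q \<sigma>"
    using strategy_attaining_best by blast
  have couplings_ne: "couplings {1,2} J Y P \<noteq> {}" using exists_coupling_below_best by blast
  show ?thesis
    unfolding Vmulti_def
  proof (rule antisym)
    show "(SUP \<sigma>\<in>strategies J Y {1..n}. INF Q\<in>couplings {1,2} J Y P. payoff {1,2} J Y {1..n} u Q \<sigma>)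
        \<le> (\<Sum>l\<in>{1..<n}. best_binary_value l)"
      using \<sigma> INF_payoff_le_sum_best by (intro cSUP_least) auto
    have "(\<Sum>l\<in>{1..<n}. best_binary_value l) \<le> (INF Q\<in>couplings {1,2} J Y P. payoff {1,2} J Y {1..n} u Q \<sigma>)"
      using couplings_ne attains by (intro cINF_greatest) auto
    also have "\<dots> \<le> (SUP \<sigma>\<in>strategies J Y {1..n}. INF Q\<in>couplings {1,2} J Y P. payoff {1,2} J Y {1..n} u Q \<sigma>)"
      using \<sigma> INF_payoff_le_sum_best by (intro cSUP_upper) (auto simp: bdd_above_def)
    finally show "(\<Sum>l\<in>{1..<n}. best_binary_value l)
        \<le> (SUP \<sigma>\<in>strategies J Y {1..n}. INF Q\<in>couplings {1,2} J Y P. payoff {1,2} J Y {1..n} u Q \<sigma>)" .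
  qed
qed

end

section \<open>The value of several experiments\<close>

theorem Vmulti_eq_sum_Max_Vsingle:
  assumes "ordered_problem n u"
    and "finite J" "J \<noteq> {}" "\<forall>j\<in>J. finite (Y j)" "\<forall>j\<in>J. \<forall>th\<in>{1,2}. prob_on (Y j) (P j th)"
  shows "Vmulti {1,2} J Y P {1..n} u
           = (\<Sum>l\<in>{1..<n}. Max ((\<lambda>j. Vsingle {1,2} (Y j) (P j) {0,1} (canon_u u l)) ` J))"
proof -
  interpret two_state_experiments n u J Y P
    using assms by (simp add: two_state_experiments_def two_state_experiments_axioms_def)
  have "Vsingle {1,2} (Y j) (P j) {0,1} (canon_u u l) = binary_value j l" if "j \<in> J" for j l
    unfolding binary_value_def incr_def using that finite_Y
    by (intro Vsingle_binary) (auto simp: canon_u_def)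
  then show ?thesis
    unfolding Vmulti_eq_sum_best best_binary_value_def by (intro sum.cong arg_cong[where f = Max] image_cong) auto
qed

lemma sum_max_eq_sum_iff:
  fixes a b :: "nat \<Rightarrow> real"
  assumes "finite I"
  shows "(\<Sum>i\<in>I. max (a i) (b i)) = (\<Sum>i\<in>I. b i) \<longleftrightarrow> (\<forall>i\<in>I. a i \<le> b i)"
proof
  assume "(\<Sum>i\<in>I. max (a i) (b i)) = (\<Sum>i\<in>I. b i)"
  then have "max (a i) (b i) = b i" if "i \<in> I" for i
    using sum_mono_inv[of b I "\<lambda>i. max (a i) (b i)" i] assms that by simp
  then show "\<forall>i\<in>I. a i \<le> b i" by (metis max.orderI max_def)
qed (simp add: max_absorb2)

theorem corollary1:
  fixes m n :: nat
    and Y :: "nat \<Rightarrow> 'y set"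
    and P :: "nat \<Rightarrow> nat \<Rightarrow> 'y \<Rightarrow> real"
    and u :: "nat \<Rightarrow> nat \<Rightarrow> real"
  assumes m2: "2 \<le> m"
    and n1: "1 \<le> n"
    and finY: "\<forall>j\<in>{1..m}. finite (Y j)"
    and expP: "\<forall>j\<in>{1..m}. \<forall>th\<in>{1,2}. prob_on (Y j) (P j th)"
    and incr1: "\<forall>i\<in>{1..<n}. u 1 i < u 1 (Suc i)"
    and decr2: "\<forall>i\<in>{1..<n}. u 2 i > u 2 (Suc i)"
    and zero1: "u 1 1 = 0 \<and> u 2 1 = 0"
    and undom: "\<forall>i\<in>{1..n}. \<not> (\<exists>\<alpha>. prob_on ({1..n} - {i}) \<alpha> \<and>
                    (\<forall>th\<in>{1,2}. u th i \<le> mixed_util ({1..n} - {i}) u th \<alpha>))"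
  shows "\<forall>j\<in>{1..m}.
           (Vmulti {1,2} {1..m} Y P {1..n} u = Vmulti {1,2} ({1..m} - {j}) Y P {1..n} u)
           \<longleftrightarrow> (\<forall>l\<in>{1..n-1}.
                  Vsingle {1,2} (Y j) (P j) {0,1} (canon_u u l)
                  \<le> Max ((\<lambda>j'. Vsingle {1,2} (Y j') (P j') {0,1} (canon_u u l)) ` ({1..m} - {j})))"
proof
  fix j assume j: "j \<in> {1..m}"
  define V where "V l j' = Vsingle {1,2} (Y j') (P j') {0,1} (canon_u u l)" for l j'
  have problem: "ordered_problem n u" using n1 incr1 decr2 zero1 undom by unfold_locales
  have "(if j = 1 then 2 else 1) \<in> {1..m} - {j}" using m2 j by auto
  then have others: "{1..m} - {j} \<noteq> {}" by blast
  have value_all: "Vmulti {1,2} {1..m} Y P {1..n} u = (\<Sum>l\<in>{1..<n}. max (V l j) (Max (V l ` ({1..m} - {j}))))"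
  proof -
    have "V l ` {1..m} = insert (V l j) (V l ` ({1..m} - {j}))" for l using j by auto
    then show ?thesis
      using Vmulti_eq_sum_Max_Vsingle[OF problem _ _ finY expP] others m2 unfolding V_def by simp
  qed
  have value_others: "Vmulti {1,2} ({1..m} - {j}) Y P {1..n} u = (\<Sum>l\<in>{1..<n}. Max (V l ` ({1..m} - {j})))"
    using Vmulti_eq_sum_Max_Vsingle[OF problem _ others, of Y P] finY expP unfolding V_def by simp
  have "{1..n-1} = {1..<n}" using n1 by auto
  then show "(Vmulti {1,2} {1..m} Y P {1..n} u = Vmulti {1,2} ({1..m} - {j}) Y P {1..n} u)
      \<longleftrightarrow> (\<forall>l\<in>{1..n-1}. V l j \<le> Max (V l ` ({1..m} - {j})))"
    unfolding value_all value_others by (simp add: sum_max_eq_sum_iff)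
qed

end
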